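(* Let $\xi,\delta,\nu,\epsilon,\mu,\sigma,\alpha,\beta,\gamma$ be real constants with $\delta<0$, and fix $T>0$. For each $N\geq 1$, let $I_1,\dots,I_N$ be independent standard Gaussian random variables ($I_i\sim\mathcal N(0,1)$), and let $(x_{1,0},y_{1,0}),\dots,(x_{N,0},y_{N,0})$ be i.i.d. random vectors in $\mathbb R^2$ with finite second moment, independent of $(I_i)_{i=1}^N$. Consider the interacting particle system \[ \begin{aligned} \frac{dx_i}{dt} &= \xi x_i + \delta x_i^3 + \nu y_i + \epsilon X + \mu + \sigma I_i,\\ \frac{dy_i}{dt} &= \alpha( x_i + \beta y_i + \gamma),\\ x_i(0)&=x_{i,0},\quad y_i(0)=y_{i,0}, \end{aligned}\qquad i=1,\dots,N, \] where $X(t)=\frac1N\sum_{j=1}^N x_j(t)$. Consider also, for $i=1,\dots,N$, the solutions $(\hat x_i,\hat y_i)$ of the mean-field (McKean–Vlasov type) system driven by the same random current and the same initial condition: \[ \begin{aligned} \frac{d\hat x_i}{dt} &= \xi \hat x_i + \delta \hat x_i^3 + \nu \hat y_i + \epsilon\, \mathbb E[\hat x_i(t)] + \mu + \sigma I_i,\\ \frac{d\hat y_i}{dt} &= \alpha( \hat x_i + \beta \hat y_i + \gamma),\\ \hat x_i(0)&=x_{i,0},\quad \hat y_i(0)=y_{i,0}, \end{aligned} \] so that $(\hat x_i,\hat y_i)_{i=1}^N$ are $N$ independent copies of the solution of this mean-field system (here $\mathbb E[\hat x_i(t)]$ is the expectation with respect to the law of $\hat x_i(t)$, which is the same for all $i$).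 Then for every $i$, \[ \lim_{N\to+\infty}\mathbb E\Big[\sup_{t\in[0,T]}|x_i(t)-\hat x_i(t)| + \sup_{t\in[0,T]}|y_i(t)-\hat y_i(t)|\Big]=0. \]
   Context: This is the propagation of chaos property for a population of FitzHugh–Nagumo (Bonhoeffer–van der Pol) oscillators coupled through the mean field $X$ in the $x$-variable, with quenched Gaussian input currents $\mu+\sigma I_i$. *)

theory Defs
  imports "HOL-Probability.Probability"
begin

end

theory Submission
  imports Defs
begin

(*
  For delta <= 0 the FitzHugh-Nagumo field is one-sided Lipschitz (the cubic term is monotone),
  and the expectation term of the mean-field equation is the same for all sample points. By
  Gronwall, xh_i(t) is therefore a Lipschitz function F(d, t) of the data d = (I_i, x_i0, y_i0).
  Extended to the closure of the range of this data, F(D_j, .) with D_j the data of particle j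
  are i.i.d. copies of xh_i, so the empirical error A_N(t) = (1/N) sum_j F(D_j, t) - E xh_i(t)
  satisfies E A_N(t)^2 <= V / N.
  Coupling particle j with such a mean-field path, the energy estimate and Gronwall, applied
  first to the average of the N squared distances and then to particle i, bound the squared
  error of particle i on [0, T] by K * integral_0^T A_N(s)^2 ds. Taking expectations (Tonelli)
  gives an O(N^(-1/2)) bound on the expected sum of the two suprema.
*)

lemma DERIV_within_nonpos_imp_antimono:
  fixes f :: "real \<Rightarrow> real"
  assumes "a \<le> b"
    and deriv: "\<And>t. t \<in> {a..b} \<Longrightarrow> \<exists>f'. (f has_real_derivative f') (at t within {a..b}) \<and> f' \<le> 0"
  shows "f b \<le> f a"
proof -
  obtain f' where f': "\<And>t. t \<in> {a..b} \<Longrightarrow> (f has_real_derivative f' t) (at t within {a..b}) \<and> f' t \<le> 0"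
    using deriv by metis
  obtain s where "s \<in> {a..b}" "f b - f a = f' s * (b - a)"
    using mvt_very_simple[OF \<open>a \<le> b\<close>, of f "\<lambda>t h. f' t * h"] f'
    by (auto simp: has_field_derivative_def)
  moreover have "f' s * (b - a) \<le> 0"
    using f' \<open>s \<in> {a..b}\<close> \<open>a \<le> b\<close> by (simp add: mult_nonpos_nonneg)
  ultimately show ?thesis
    by simp
qed

lemma gronwall_bound:
  fixes u f :: "real \<Rightarrow> real"
  assumes "0 \<le> C"
    and deriv: "\<And>t. t \<in> {0..T} \<Longrightarrow>
      \<exists>u'. (u has_real_derivative u') (at t within {0..T}) \<and> u' \<le> C * u t + f t"
    and f_cont: "continuous_on {0..T} f"
    and f_nonneg: "\<And>t. t \<in> {0..T} \<Longrightarrow> 0 \<le> f t"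
    and "0 \<le> u 0"
    and t: "t \<in> {0..T}"
  shows "u t \<le> exp (C * T) * (u 0 + integral {0..T} f)"
proof -
  define h where "h r = exp (- C * r) * f r" for r
  have h_cont: "continuous_on {0..T} h"
    unfolding h_def by (intro continuous_intros f_cont)
  define \<phi> where "\<phi> s = exp (- C * s) * u s - integral {0..s} h" for s
  have sub: "{0..t} \<subseteq> {0..T}"
    using t by auto
  have "\<phi> t \<le> \<phi> 0"
  proof (rule DERIV_within_nonpos_imp_antimono[where f = \<phi>])
    fix s assume "s \<in> {0..t}"
    then have s: "s \<in> {0..T}"
      using sub by auto
    obtain u' where u': "(u has_real_derivative u') (at s within {0..T})" "u' \<le> C * u s + f s"
      using deriv[OF s] by blast
    have "(\<phi> has_real_derivative exp (- C * s) * u' - C * exp (- C * s) * u s - h s) (at s within {0..T})"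
      unfolding \<phi>_def[abs_def]
      by (rule derivative_eq_intros u' integral_has_real_derivative[OF h_cont s] refl | simp)+
    moreover have "exp (- C * s) * u' \<le> exp (- C * s) * (C * u s + f s)"
      using u'(2) by (intro mult_left_mono) auto
    ultimately show "\<exists>\<phi>'. (\<phi> has_real_derivative \<phi>') (at s within {0..t}) \<and> \<phi>' \<le> 0"
      using has_field_derivative_subset[OF _ sub] by (fastforce simp: h_def algebra_simps)
  qed (use t in auto)
  then have A: "exp (- C * t) * u t \<le> u 0 + integral {0..t} h"
    unfolding \<phi>_def by simp
  have "integral {0..t} h \<le> integral {0..t} f"
    using sub f_nonneg \<open>0 \<le> C\<close> t
    by (intro integral_le integrable_continuous_interval continuous_on_subset[OF h_cont]
          continuous_on_subset[OF f_cont]) (auto simp: h_def intro!: mult_left_le_one_le)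
  also have "\<dots> \<le> integral {0..T} f"
    using sub f_nonneg t
    by (intro integral_subset_le integrable_continuous_interval continuous_on_subset[OF f_cont]) auto
  finally have "exp (- C * t) * u t \<le> u 0 + integral {0..T} f"
    using A by linarith
  then have "u t \<le> exp (C * t) * (u 0 + integral {0..T} f)"
    by (simp add: exp_minus field_simps)
  moreover have "0 \<le> u 0 + integral {0..T} f"
    using \<open>0 \<le> u 0\<close> f_nonneg by (intro add_nonneg_nonneg integral_nonneg integrable_continuous_interval f_cont) auto
  moreover have "exp (C * t) \<le> exp (C * T)"
    using t \<open>0 \<le> C\<close> by (auto intro: mult_left_mono)
  ultimately show ?thesis
    by (meson mult_right_mono order_trans)
qed

lemma integral_cmult_add_const:
  fixes f :: "real \<Rightarrow> real"
  assumes "f integrable_on {0..T}" "0 \<le> T"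
  shows "integral {0..T} (\<lambda>s. a * f s + b) = a * integral {0..T} f + b * T"
proof -
  have "integral {0..T} (\<lambda>s. a * f s + b) = integral {0..T} (\<lambda>s. a * f s) + integral {0..T} (\<lambda>s. b)"
    using assms(1) by (intro integral_add integrable_on_mult_right) auto
  then show ?thesis
    using assms(2) by simp
qed

lemma le_if_le_add_sq:
  fixes a b c :: real
  assumes "\<And>\<eta>. 0 < \<eta> \<Longrightarrow> a \<le> b + c * \<eta>\<^sup>2"
  shows "a \<le> b"
proof (rule tendsto_lowerbound)
  show "((\<lambda>\<eta>. b + c * \<eta>\<^sup>2) \<longlongrightarrow> b) (at_right 0)"
    by (auto intro!: tendsto_eq_intros)
  show "\<forall>\<^sub>F \<eta> in at_right 0. a \<le> b + c * \<eta>\<^sup>2"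
    using eventually_at_right_less[of 0] by (rule eventually_mono) (rule assms)
qed simp

lemma SUP_abs_add_SUP_abs_le:
  fixes f g :: "'a \<Rightarrow> real"
  assumes "A \<noteq> {}" and le: "\<And>t. t \<in> A \<Longrightarrow> (f t)\<^sup>2 + (g t)\<^sup>2 \<le> r"
  shows "(SUP t\<in>A. \<bar>f t\<bar>) + (SUP t\<in>A. \<bar>g t\<bar>) \<le> 2 * sqrt r"
proof -
  have "\<bar>f t\<bar> \<le> sqrt r" "\<bar>g t\<bar> \<le> sqrt r" if "t \<in> A" for t
  proof -
    have "(f t)\<^sup>2 \<le> r" "(g t)\<^sup>2 \<le> r"
      using le[OF that] zero_le_power2[of "f t"] zero_le_power2[of "g t"] by linarith+
    then show "\<bar>f t\<bar> \<le> sqrt r" "\<bar>g t\<bar> \<le> sqrt r"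
      by (simp_all add: real_le_rsqrt)
  qed
  then have "(SUP t\<in>A. \<bar>f t\<bar>) \<le> sqrt r" "(SUP t\<in>A. \<bar>g t\<bar>) \<le> sqrt r"
    by (auto intro!: cSUP_least \<open>A \<noteq> {}\<close>)
  then show ?thesis
    by simp
qed

lemma lipschitz_factor_through_closure:
  fixes f :: "'a \<Rightarrow> real" and h :: "'a \<Rightarrow> 'b::metric_space"
  assumes "0 \<le> L" and lip: "\<And>\<omega> \<omega>'. \<omega> \<in> A \<Longrightarrow> \<omega>' \<in> A \<Longrightarrow> \<bar>f \<omega> - f \<omega>'\<bar> \<le> L * dist (h \<omega>) (h \<omega>')"
  shows "\<exists>g. L-lipschitz_on (closure (h ` A)) g \<and> (\<forall>\<omega>\<in>A. g (h \<omega>) = f \<omega>)"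
proof -
  define g0 where "g0 d = f (SOME \<omega>. \<omega> \<in> A \<and> h \<omega> = d)" for d
  have g0: "g0 (h \<omega>) = f \<omega>" if "\<omega> \<in> A" for \<omega>
  proof -
    have "(SOME \<omega>'. \<omega>' \<in> A \<and> h \<omega>' = h \<omega>) \<in> A \<and> h (SOME \<omega>'. \<omega>' \<in> A \<and> h \<omega>' = h \<omega>) = h \<omega>"
      by (rule someI[of _ \<omega>]) (use that in auto)
    then show ?thesis
      using lip[OF _ that, of "SOME \<omega>'. \<omega>' \<in> A \<and> h \<omega>' = h \<omega>"] unfolding g0_def by simp
  qed
  have "L-lipschitz_on (h ` A) g0"
    using \<open>0 \<le> L\<close> lip by (auto intro!: lipschitz_onI simp: g0 dist_real_def)
  then obtain g where "L-lipschitz_on (closure (h ` A)) g" "\<forall>d\<in>h ` A. g d = g0 d"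
    using lipschitz_extend_closure by blast
  then show ?thesis
    using g0 by auto
qed

lemma continuous_on_closure_Times_lipschitz:
  fixes g :: "'a::metric_space \<Rightarrow> 'b::metric_space \<Rightarrow> 'c::metric_space"
  assumes lip: "\<And>t. t \<in> U \<Longrightarrow> L-lipschitz_on (closure S) (\<lambda>d. g d t)"
    and cont: "\<And>d. d \<in> S \<Longrightarrow> continuous_on U (g d)"
  shows "continuous_on (closure S \<times> U) (\<lambda>p. g (fst p) (snd p))"
  unfolding continuous_on_iff
proof (intro ballI allI impI)
  fix p and e :: real assume p: "p \<in> closure S \<times> U" and "0 < e"
  then have L: "0 \<le> L"
    using lip lipschitz_on_nonneg by (metis mem_Times_iff)
  define e' where "e' = e / (9 * (L + 1))"
  have "0 < e'"
    unfolding e'_def using \<open>0 < e\<close> L by simp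
  have "3 * L * e' \<le> e / 3"
    unfolding e'_def using \<open>0 < e\<close> L by (simp add: field_simps)
  obtain s where s: "s \<in> S" "dist s (fst p) < e'"
    using p \<open>0 < e'\<close> closure_approachable[of "fst p" S] by auto
  obtain r where "0 < r" and r: "\<And>t. t \<in> U \<Longrightarrow> dist t (snd p) < r \<Longrightarrow> dist (g s t) (g s (snd p)) < e / 3"
    using cont[OF s(1)] p \<open>0 < e\<close> unfolding continuous_on_iff by (metis mem_Times_iff zero_less_divide_iff zero_less_numeral)
  have sS: "s \<in> closure S"
    using s(1) closure_subset by blast
  show "\<exists>d>0. \<forall>q\<in>closure S \<times> U. dist q p < d \<longrightarrow> dist (g (fst q) (snd q)) (g (fst p) (snd p)) < e"
  proof (intro exI[of _ "min r e'"] conjI ballI impI)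
    fix q assume q: "q \<in> closure S \<times> U" and "dist q p < min r e'"
    then have "dist (fst q) (fst p) < e'" "dist (snd q) (snd p) < r"
      using dist_fst_le[of q p] dist_snd_le[of q p] by linarith+
    then have "dist (fst q) s < 2 * e'"
      using s(2) dist_triangle[of "fst q" s "fst p"] dist_commute[of s "fst p"] by linarith
    have "dist (g (fst q) (snd q)) (g (fst p) (snd p))
        \<le> dist (g (fst q) (snd q)) (g s (snd q)) + dist (g s (snd q)) (g s (snd p))
          + dist (g s (snd p)) (g (fst p) (snd p))"
      by (meson dist_triangle order_trans add_right_mono)
    also have "dist (g (fst q) (snd q)) (g s (snd q)) \<le> L * dist (fst q) s"
      using lipschitz_onD[OF lip[of "snd q"], of "fst q" s] q sS by auto
    also have "dist (g s (snd p)) (g (fst p) (snd p)) \<le> L * dist s (fst p)"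
      using lipschitz_onD[OF lip[of "snd p"] sS, of "fst p"] p by auto
    also have "dist (g s (snd q)) (g s (snd p)) < e / 3"
      using r q \<open>dist (snd q) (snd p) < r\<close> by auto
    finally show "dist (g (fst q) (snd q)) (g (fst p) (snd p)) < e"
      using \<open>dist (fst q) s < 2 * e'\<close> s(2) L \<open>3 * L * e' \<le> e / 3\<close> \<open>0 < e\<close>
        mult_left_mono[of "dist (fst q) s" "2 * e'" L] mult_left_mono[of "dist s (fst p)" e' L]
      by linarith
  qed (use \<open>0 < r\<close> \<open>0 < e'\<close> in auto)
qed

lemma ennreal_tendsto_0_if_eventually_le:
  fixes f :: "nat \<Rightarrow> ennreal"
  assumes "\<And>\<eta>. 0 < \<eta> \<Longrightarrow> eventually (\<lambda>N. f N \<le> ennreal \<eta>) sequentially"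
  shows "f \<longlonglongrightarrow> 0"
proof (rule order_tendstoI)
  fix a :: ennreal assume "0 < a"
  obtain \<eta> where "0 < \<eta>" "ennreal \<eta> < a"
  proof (cases a)
    case (real r)
    with \<open>0 < a\<close> show ?thesis
      by (intro that[of "r / 2"]) (auto simp: ennreal_less_iff)
  next
    case top
    then show ?thesis
      by (intro that[of 1]) auto
  qed
  then show "eventually (\<lambda>N. f N < a) sequentially"
    using assms[of \<eta>] by (auto elim: eventually_mono)
qed simp

section \<open>Empirical means of pairwise independent variables\<close>

lemma (in prob_space) indep_vars_imp_indep_var:
  assumes "indep_vars (\<lambda>_. N) X UNIV" and "a \<noteq> b"
  shows "indep_var N (X a) N (X b)"
proof -
  have "indep_var (PiM {a} (\<lambda>_. N)) (\<lambda>\<omega>. restrict (\<lambda>l. X l \<omega>) {a})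
                  (PiM {b} (\<lambda>_. N)) (\<lambda>\<omega>. restrict (\<lambda>l. X l \<omega>) {b})"
    using assms by (intro indep_var_restrict) auto
  then have "indep_var N ((\<lambda>f. f a) \<circ> (\<lambda>\<omega>. restrict (\<lambda>l. X l \<omega>) {a}))
                  N ((\<lambda>f. f b) \<circ> (\<lambda>\<omega>. restrict (\<lambda>l. X l \<omega>) {b}))"
    by (rule indep_var_compose) (auto intro!: measurable_component_singleton)
  then show ?thesis
    by (simp add: comp_def)
qed

lemma (in prob_space) expectation_sq_empirical_mean_le:
  fixes Y :: "nat \<Rightarrow> 'a \<Rightarrow> real"
  assumes rv: "\<And>j. random_variable borel (Y j)"
    and indep: "\<And>j k. j \<noteq> k \<Longrightarrow> indep_var borel (Y j) borel (Y k)"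
    and sq_int: "\<And>j. integrable M (\<lambda>\<omega>. (Y j \<omega>)\<^sup>2)"
    and mean: "\<And>j. expectation (Y j) = m"
    and var: "\<And>j. variance (Y j) \<le> V"
    and "0 < N"
  shows "integrable M (\<lambda>\<omega>. ((\<Sum>j<N. Y j \<omega>) / real N - m)\<^sup>2)"
    and "expectation (\<lambda>\<omega>. ((\<Sum>j<N. Y j \<omega>) / real N - m)\<^sup>2) \<le> V / real N"
proof -
  define Z where "Z j \<omega> = Y j \<omega> - m" for j \<omega>
  have [measurable]: "random_variable borel (Z j)" for j
    unfolding Z_def using rv by measurable
  have Y_int: "integrable M (Y j)" for j
    using square_integrable_imp_integrable[OF rv sq_int] .
  have Z_int: "integrable M (Z j)" for j
    unfolding Z_def using Y_int by simp
  have Z_sq_int: "integrable M (\<lambda>\<omega>. (Z j \<omega>)\<^sup>2)" for j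
    unfolding Z_def power2_diff using Y_int sq_int by simp
  have Z_mean: "expectation (Z j) = 0" for j
    unfolding Z_def using Y_int[of j] mean[of j] by (simp add: prob_space)
  have cross: "integrable M (\<lambda>\<omega>. Z j \<omega> * Z k \<omega>)
      \<and> expectation (\<lambda>\<omega>. Z j \<omega> * Z k \<omega>) = (if j = k then variance (Y j) else 0)" for j k
  proof (cases "j = k")
    case True
    then show ?thesis
      using Z_sq_int[of j] mean[of j] by (simp add: Z_def power2_eq_square)
  next
    case False
    have "indep_var borel (Z j) borel (Z k)"
      using indep_var_compose[OF indep[OF False], of "\<lambda>v. v - m" borel "\<lambda>v. v - m" borel]
      by (simp add: comp_def Z_def[abs_def])
    then show ?thesis
      using indep_var_integrable[OF _ Z_int Z_int] indep_var_lebesgue_integral[OF _ Z_int Z_int] Z_mean False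
      by simp
  qed
  have sq: "((\<Sum>j<N. Y j \<omega>) / real N - m)\<^sup>2 = (\<Sum>j<N. \<Sum>k<N. Z j \<omega> * Z k \<omega>) / (real N)\<^sup>2" for \<omega>
  proof -
    have "(\<Sum>j<N. Y j \<omega>) / real N - m = (\<Sum>j<N. Z j \<omega>) / real N"
      using \<open>0 < N\<close> by (simp add: Z_def sum_subtractf field_simps)
    then show ?thesis
      by (simp add: power_divide power2_eq_square sum_product)
  qed
  show "integrable M (\<lambda>\<omega>. ((\<Sum>j<N. Y j \<omega>) / real N - m)\<^sup>2)"
    unfolding sq using cross by auto
  have "expectation (\<lambda>\<omega>. (\<Sum>j<N. \<Sum>k<N. Z j \<omega> * Z k \<omega>))
      = (\<Sum>j<N. \<Sum>k<N. expectation (\<lambda>\<omega>. Z j \<omega> * Z k \<omega>))"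
    using cross by (simp add: Bochner_Integration.integral_sum)
  also have "\<dots> = (\<Sum>j<N. variance (Y j))"
    using cross by (simp add: sum.delta)
  also have "\<dots> \<le> real N * V"
    using sum_mono[of "{..<N}" "\<lambda>j. variance (Y j)" "\<lambda>_. V"] var by simp
  finally show "expectation (\<lambda>\<omega>. ((\<Sum>j<N. Y j \<omega>) / real N - m)\<^sup>2) \<le> V / real N"
    unfolding sq using \<open>0 < N\<close> by (simp add: power2_eq_square divide_le_eq field_simps)
qed

section \<open>Energy estimates for the FitzHugh-Nagumo system\<close>

definition fhn_rate :: "real \<Rightarrow> real \<Rightarrow> real \<Rightarrow> real \<Rightarrow> real" where
  "fhn_rate \<xi> \<nu> \<alpha> \<beta> = 2 * \<bar>\<xi>\<bar> + \<bar>\<nu>\<bar> + 1 + \<bar>\<alpha>\<bar> + 2 * \<bar>\<alpha> * \<beta>\<bar>"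

lemma fhn_rate_nonneg: "0 \<le> fhn_rate \<xi> \<nu> \<alpha> \<beta>"
  by (simp add: fhn_rate_def)

lemma power3_diff_mult_nonneg: "0 \<le> ((a::real) ^ 3 - b ^ 3) * (a - b)"
proof -
  have "(a ^ 3 - b ^ 3) * (a - b) = (a - b)\<^sup>2 * ((a + b / 2)\<^sup>2 + 3 / 4 * b\<^sup>2)"
    by (simp add: power2_eq_square power3_eq_cube algebra_simps)
  then show ?thesis
    by simp
qed

text \<open>The cubic term is monotone for \<open>\<delta> \<le> 0\<close>, so it only helps; the remaining
  linear terms are absorbed by Young's inequality \<open>2ab \<le> a\<^sup>2 + b\<^sup>2\<close>.\<close>

lemma fhn_energy_ineq:
  fixes x1 x2 y1 y2 a1 a2 :: real
  assumes "\<delta> \<le> 0"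
  shows "2 * (x1 - x2) * ((\<xi> * x1 + \<delta> * x1 ^ 3 + \<nu> * y1 + a1) - (\<xi> * x2 + \<delta> * x2 ^ 3 + \<nu> * y2 + a2))
       + 2 * (y1 - y2) * (\<alpha> * (x1 + \<beta> * y1 + \<gamma>) - \<alpha> * (x2 + \<beta> * y2 + \<gamma>))
       \<le> fhn_rate \<xi> \<nu> \<alpha> \<beta> * ((x1 - x2)\<^sup>2 + (y1 - y2)\<^sup>2) + (a1 - a2)\<^sup>2"
proof -
  define d e b where "d = x1 - x2" and "e = y1 - y2" and "b = a1 - a2"
  have cubic: "\<delta> * ((x1 ^ 3 - x2 ^ 3) * d) \<le> 0"
    using power3_diff_mult_nonneg[of x1 x2] assms unfolding d_def by (simp add: mult_nonpos_nonneg)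
  have lhs: "2 * (x1 - x2) * ((\<xi> * x1 + \<delta> * x1 ^ 3 + \<nu> * y1 + a1) - (\<xi> * x2 + \<delta> * x2 ^ 3 + \<nu> * y2 + a2))
        + 2 * (y1 - y2) * (\<alpha> * (x1 + \<beta> * y1 + \<gamma>) - \<alpha> * (x2 + \<beta> * y2 + \<gamma>))
      = 2 * \<xi> * d\<^sup>2 + 2 * (\<delta> * ((x1 ^ 3 - x2 ^ 3) * d)) + 2 * (\<nu> + \<alpha>) * (d * e) + 2 * d * b
        + 2 * \<alpha> * \<beta> * e\<^sup>2"
    unfolding d_def e_def b_def by (simp add: algebra_simps power2_eq_square)
  have de: "2 * \<bar>d * e\<bar> \<le> d\<^sup>2 + e\<^sup>2"
    using sum_squares_bound[of "\<bar>d\<bar>" "\<bar>e\<bar>"] by (simp add: abs_mult)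
  have "2 * (\<nu> + \<alpha>) * (d * e) \<le> (\<bar>\<nu>\<bar> + \<bar>\<alpha>\<bar>) * (2 * \<bar>d * e\<bar>)"
  proof -
    have "2 * (\<nu> + \<alpha>) * (d * e) \<le> \<bar>2 * (\<nu> + \<alpha>) * (d * e)\<bar>"
      by (rule abs_ge_self)
    also have "\<dots> = \<bar>\<nu> + \<alpha>\<bar> * (2 * \<bar>d * e\<bar>)"
      by (simp only: abs_mult abs_numeral mult_ac)
    also have "\<dots> \<le> (\<bar>\<nu>\<bar> + \<bar>\<alpha>\<bar>) * (2 * \<bar>d * e\<bar>)"
      by (intro mult_right_mono abs_triangle_ineq) auto
    finally show ?thesis .
  qed
  also have "\<dots> \<le> (\<bar>\<nu>\<bar> + \<bar>\<alpha>\<bar>) * (d\<^sup>2 + e\<^sup>2)"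
    using de by (intro mult_left_mono) auto
  finally have cross: "2 * (\<nu> + \<alpha>) * (d * e) \<le> (\<bar>\<nu>\<bar> + \<bar>\<alpha>\<bar>) * (d\<^sup>2 + e\<^sup>2)" .
  have "2 * \<xi> * d\<^sup>2 \<le> 2 * \<bar>\<xi>\<bar> * d\<^sup>2" "2 * \<alpha> * \<beta> * e\<^sup>2 \<le> 2 * \<bar>\<alpha> * \<beta>\<bar> * e\<^sup>2"
    by (simp_all add: mult_right_mono)
  moreover have "2 * d * b \<le> d\<^sup>2 + b\<^sup>2"
    by (rule sum_squares_bound)
  moreover have "fhn_rate \<xi> \<nu> \<alpha> \<beta> * (d\<^sup>2 + e\<^sup>2) + b\<^sup>2
      = 2 * \<bar>\<xi>\<bar> * d\<^sup>2 + (\<bar>\<nu>\<bar> + \<bar>\<alpha>\<bar>) * (d\<^sup>2 + e\<^sup>2) + (d\<^sup>2 + b\<^sup>2) + 2 * \<bar>\<alpha> * \<beta>\<bar> * e\<^sup>2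
        + (2 * \<bar>\<xi>\<bar> * e\<^sup>2 + e\<^sup>2 + 2 * \<bar>\<alpha> * \<beta>\<bar> * d\<^sup>2)"
    unfolding fhn_rate_def by (simp add: algebra_simps)
  moreover have "0 \<le> 2 * \<bar>\<xi>\<bar> * e\<^sup>2 + e\<^sup>2 + 2 * \<bar>\<alpha> * \<beta>\<bar> * d\<^sup>2"
    by simp
  ultimately show ?thesis
    using lhs cubic cross unfolding d_def e_def b_def by linarith
qed

lemma fhn_sq_dist_deriv:
  fixes x1 x2 y1 y2 :: "real \<Rightarrow> real"
  assumes "\<delta> \<le> 0"
    and "(x1 has_real_derivative \<xi> * x1 t + \<delta> * (x1 t) ^ 3 + \<nu> * y1 t + a1) (at t within S)"
    and "(y1 has_real_derivative \<alpha> * (x1 t + \<beta> * y1 t + \<gamma>)) (at t within S)"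
    and "(x2 has_real_derivative \<xi> * x2 t + \<delta> * (x2 t) ^ 3 + \<nu> * y2 t + a2) (at t within S)"
    and "(y2 has_real_derivative \<alpha> * (x2 t + \<beta> * y2 t + \<gamma>)) (at t within S)"
  shows "\<exists>u'. ((\<lambda>s. (x1 s - x2 s)\<^sup>2 + (y1 s - y2 s)\<^sup>2) has_real_derivative u') (at t within S)
           \<and> u' \<le> fhn_rate \<xi> \<nu> \<alpha> \<beta> * ((x1 t - x2 t)\<^sup>2 + (y1 t - y2 t)\<^sup>2) + (a1 - a2)\<^sup>2"
proof (intro exI conjI)
  show "((\<lambda>s. (x1 s - x2 s)\<^sup>2 + (y1 s - y2 s)\<^sup>2) has_real_derivative
      2 * (x1 t - x2 t) * ((\<xi> * x1 t + \<delta> * (x1 t) ^ 3 + \<nu> * y1 t + a1) - (\<xi> * x2 t + \<delta> * (x2 t) ^ 3 + \<nu> * y2 t + a2))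
    + 2 * (y1 t - y2 t) * (\<alpha> * (x1 t + \<beta> * y1 t + \<gamma>) - \<alpha> * (x2 t + \<beta> * y2 t + \<gamma>))) (at t within S)"
    using assms(2-) by (auto intro!: derivative_eq_intros simp: algebra_simps)
qed (rule fhn_energy_ineq[OF assms(1)])

lemma sq_forcing_gap_le:
  fixes z p :: "nat \<Rightarrow> real"
  assumes "0 < real N" and "\<bar>c - c'\<bar> \<le> \<theta>"
  shows "(\<epsilon> * ((\<Sum>k<N. z k) / real N) + c - (\<epsilon> * m + c'))\<^sup>2
    \<le> 3 * \<epsilon>\<^sup>2 * ((\<Sum>k<N. (z k - p k)\<^sup>2) / real N) + 3 * \<epsilon>\<^sup>2 * ((\<Sum>k<N. p k) / real N - m)\<^sup>2
      + 3 * \<theta>\<^sup>2"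
proof -
  define a where "a = (\<Sum>k<N. z k - p k) / real N"
  define b where "b = (\<Sum>k<N. p k) / real N - m"
  have "(\<Sum>k<N. z k - p k)\<^sup>2 \<le> (\<Sum>k<N. (z k - p k)\<^sup>2) * real N"
    using sum_squared_le_sum_of_squares[of "\<lambda>k. z k - p k" "{..<N}"] by simp
  then have "a\<^sup>2 \<le> (\<Sum>k<N. (z k - p k)\<^sup>2) / real N"
    unfolding a_def using assms(1) by (simp add: power2_eq_square field_simps)
  then have a: "(\<epsilon> * a)\<^sup>2 \<le> \<epsilon>\<^sup>2 * ((\<Sum>k<N. (z k - p k)\<^sup>2) / real N)"
    unfolding power_mult_distrib by (rule mult_left_mono) simp
  have c: "(c - c')\<^sup>2 \<le> \<theta>\<^sup>2"
    using assms(2) by (metis abs_ge_zero power2_abs power_mono order_trans)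
  have "\<epsilon> * ((\<Sum>k<N. z k) / real N) + c - (\<epsilon> * m + c') = \<epsilon> * a + \<epsilon> * b + (c - c')"
    unfolding a_def b_def by (simp add: sum_subtractf diff_divide_distrib algebra_simps)
  then have "(\<epsilon> * ((\<Sum>k<N. z k) / real N) + c - (\<epsilon> * m + c'))\<^sup>2 = (\<epsilon> * a + \<epsilon> * b + (c - c'))\<^sup>2"
    by (rule arg_cong)
  also have "\<dots> \<le> 3 * (\<epsilon> * a)\<^sup>2 + 3 * (\<epsilon> * b)\<^sup>2 + 3 * (c - c')\<^sup>2"
  proof -
    have "3 * (\<epsilon> * a)\<^sup>2 + 3 * (\<epsilon> * b)\<^sup>2 + 3 * (c - c')\<^sup>2 - (\<epsilon> * a + \<epsilon> * b + (c - c'))\<^sup>2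
        = (\<epsilon> * a - \<epsilon> * b)\<^sup>2 + (\<epsilon> * b - (c - c'))\<^sup>2 + (\<epsilon> * a - (c - c'))\<^sup>2"
      by (simp add: power2_eq_square algebra_simps)
    then show ?thesis
      using zero_le_power2[of "\<epsilon> * a - \<epsilon> * b"] zero_le_power2[of "\<epsilon> * b - (c - c')"]
        zero_le_power2[of "\<epsilon> * a - (c - c')"] by linarith
  qed
  also have "\<dots> \<le> 3 * \<epsilon>\<^sup>2 * ((\<Sum>k<N. (z k - p k)\<^sup>2) / real N) + 3 * \<epsilon>\<^sup>2 * b\<^sup>2 + 3 * \<theta>\<^sup>2"
    using a c unfolding power_mult_distrib by linarith
  finally show ?thesis
    unfolding b_def .
qed

text \<open>The gap between
  the two empirical means is controlled by \<open>mean_sq_dist\<close>, so Gronwall is applied to it first and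
  only then to a single particle.\<close>

locale fhn_coupled_paths =
  fixes \<xi> \<delta> \<nu> \<epsilon> \<alpha> \<beta> \<gamma> T \<eta> \<theta> :: real and N :: nat
    and x y p q :: "nat \<Rightarrow> real \<Rightarrow> real" and c c' :: "nat \<Rightarrow> real" and m :: "real \<Rightarrow> real"
  assumes delta: "\<delta> \<le> 0" and N: "0 < N"
    and x': "\<And>j s. j < N \<Longrightarrow> s \<in> {0..T} \<Longrightarrow> (x j has_real_derivative
       \<xi> * x j s + \<delta> * (x j s) ^ 3 + \<nu> * y j s + (\<epsilon> * ((\<Sum>k<N. x k s) / real N) + c j)) (at s within {0..T})"
    and y': "\<And>j s. j < N \<Longrightarrow> s \<in> {0..T} \<Longrightarrow>
       (y j has_real_derivative \<alpha> * (x j s + \<beta> * y j s + \<gamma>)) (at s within {0..T})"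
    and p': "\<And>j s. j < N \<Longrightarrow> s \<in> {0..T} \<Longrightarrow> (p j has_real_derivative
       \<xi> * p j s + \<delta> * (p j s) ^ 3 + \<nu> * q j s + (\<epsilon> * m s + c' j)) (at s within {0..T})"
    and q': "\<And>j s. j < N \<Longrightarrow> s \<in> {0..T} \<Longrightarrow>
       (q j has_real_derivative \<alpha> * (p j s + \<beta> * q j s + \<gamma>)) (at s within {0..T})"
    and m_cont: "continuous_on {0..T} m"
    and init: "\<And>j. j < N \<Longrightarrow> (x j 0 - p j 0)\<^sup>2 + (y j 0 - q j 0)\<^sup>2 \<le> \<eta>\<^sup>2"
    and forcing: "\<And>j. j < N \<Longrightarrow> \<bar>c j - c' j\<bar> \<le> \<theta>"
begin

definition sq_dist :: "nat \<Rightarrow> real \<Rightarrow> real" where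
  "sq_dist j s = (x j s - p j s)\<^sup>2 + (y j s - q j s)\<^sup>2"

definition mean_sq_dist :: "real \<Rightarrow> real" where
  "mean_sq_dist s = (\<Sum>j<N. sq_dist j s) / real N"

definition mean_gap :: "real \<Rightarrow> real" where
  "mean_gap s = (\<Sum>k<N. p k s) / real N - m s"

lemma sq_dist_nonneg: "0 \<le> sq_dist j s"
  by (simp add: sq_dist_def)

lemma continuous_on_mean_gap: "continuous_on {0..T} mean_gap"
proof -
  have "continuous_on {0..T} (p j)" if "j < N" for j
    using p'[OF that] by (metis DERIV_continuous continuous_on_eq_continuous_within)
  then show ?thesis
    unfolding mean_gap_def using N by (intro continuous_intros m_cont) auto
qed

lemma integrable_mean_gap_sq: "(\<lambda>s. (mean_gap s)\<^sup>2) integrable_on {0..T}"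
  by (intro integrable_continuous_interval continuous_intros continuous_on_mean_gap)

lemma sq_dist_deriv:
  assumes j: "j < N" and s: "s \<in> {0..T}"
  shows "\<exists>u'. (sq_dist j has_real_derivative u') (at s within {0..T}) \<and> u' \<le> fhn_rate \<xi> \<nu> \<alpha> \<beta> * sq_dist j s
    + (3 * \<epsilon>\<^sup>2 * mean_sq_dist s + 3 * \<epsilon>\<^sup>2 * (mean_gap s)\<^sup>2 + 3 * \<theta>\<^sup>2)"
proof -
  have "(\<Sum>k<N. (x k s - p k s)\<^sup>2) / real N \<le> mean_sq_dist s"
    unfolding mean_sq_dist_def sq_dist_def using N by (intro divide_right_mono sum_mono) auto
  then have "3 * \<epsilon>\<^sup>2 * ((\<Sum>k<N. (x k s - p k s)\<^sup>2) / real N) \<le> 3 * \<epsilon>\<^sup>2 * mean_sq_dist s"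
    by (intro mult_left_mono) auto
  with sq_forcing_gap_le[of N "c j" "c' j" \<theta> \<epsilon> "\<lambda>k. x k s" "m s" "\<lambda>k. p k s"] N forcing[OF j]
  have "(\<epsilon> * ((\<Sum>k<N. x k s) / real N) + c j - (\<epsilon> * m s + c' j))\<^sup>2
      \<le> 3 * \<epsilon>\<^sup>2 * mean_sq_dist s + 3 * \<epsilon>\<^sup>2 * (mean_gap s)\<^sup>2 + 3 * \<theta>\<^sup>2"
    unfolding mean_gap_def by linarith
  with fhn_sq_dist_deriv[OF delta x'[OF j s] y'[OF j s] p'[OF j s] q'[OF j s]] show ?thesis
    unfolding sq_dist_def[abs_def] by fastforce
qed

lemma mean_sq_dist_le:
  assumes s: "s \<in> {0..T}"
  shows "mean_sq_dist s \<le> exp ((fhn_rate \<xi> \<nu> \<alpha> \<beta> + 3 * \<epsilon>\<^sup>2) * T)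
    * (\<eta>\<^sup>2 + 3 * \<epsilon>\<^sup>2 * integral {0..T} (\<lambda>r. (mean_gap r)\<^sup>2) + 3 * \<theta>\<^sup>2 * T)"
proof -
  define C where "C = fhn_rate \<xi> \<nu> \<alpha> \<beta>"
  have "mean_sq_dist s \<le> exp ((C + 3 * \<epsilon>\<^sup>2) * T)
      * (mean_sq_dist 0 + integral {0..T} (\<lambda>r. 3 * \<epsilon>\<^sup>2 * (mean_gap r)\<^sup>2 + 3 * \<theta>\<^sup>2))"
  proof (rule gronwall_bound[OF _ _ _ _ _ s])
    fix r assume r: "r \<in> {0..T}"
    obtain u' where u': "\<And>j. j < N \<Longrightarrow> (sq_dist j has_real_derivative u' j) (at r within {0..T})
        \<and> u' j \<le> C * sq_dist j r + (3 * \<epsilon>\<^sup>2 * mean_sq_dist r + 3 * \<epsilon>\<^sup>2 * (mean_gap r)\<^sup>2 + 3 * \<theta>\<^sup>2)"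
      using sq_dist_deriv[OF _ r] unfolding C_def by metis
    have U': "(mean_sq_dist has_real_derivative (\<Sum>j<N. u' j) / real N) (at r within {0..T})"
      unfolding mean_sq_dist_def[abs_def] using u' by (intro DERIV_cdivide DERIV_sum) auto
    have "(\<Sum>j<N. u' j)
        \<le> (\<Sum>j<N. C * sq_dist j r + (3 * \<epsilon>\<^sup>2 * mean_sq_dist r + 3 * \<epsilon>\<^sup>2 * (mean_gap r)\<^sup>2 + 3 * \<theta>\<^sup>2))"
      using u' by (intro sum_mono) auto
    also have "\<dots> = real N * (C * mean_sq_dist r + (3 * \<epsilon>\<^sup>2 * mean_sq_dist r + 3 * \<epsilon>\<^sup>2 * (mean_gap r)\<^sup>2 + 3 * \<theta>\<^sup>2))"
      using N by (simp add: mean_sq_dist_def sum.distrib sum_distrib_left[symmetric] algebra_simps)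
    finally have "(\<Sum>j<N. u' j) / real N \<le> (C + 3 * \<epsilon>\<^sup>2) * mean_sq_dist r + (3 * \<epsilon>\<^sup>2 * (mean_gap r)\<^sup>2 + 3 * \<theta>\<^sup>2)"
      using N by (simp add: pos_divide_le_eq algebra_simps)
    with U' show "\<exists>U'. (mean_sq_dist has_real_derivative U') (at r within {0..T})
        \<and> U' \<le> (C + 3 * \<epsilon>\<^sup>2) * mean_sq_dist r + (3 * \<epsilon>\<^sup>2 * (mean_gap r)\<^sup>2 + 3 * \<theta>\<^sup>2)"
      by blast
  qed (use sq_dist_nonneg in \<open>auto intro!: continuous_intros continuous_on_mean_gap divide_nonneg_nonneg
      sum_nonneg simp: C_def fhn_rate_nonneg mean_sq_dist_def\<close>)
  also have "mean_sq_dist 0 \<le> \<eta>\<^sup>2"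
    using init sum_mono[of "{..<N}" "\<lambda>j. sq_dist j 0" "\<lambda>_. \<eta>\<^sup>2"] N
    by (simp add: mean_sq_dist_def sq_dist_def divide_le_eq mult.commute)
  also have "integral {0..T} (\<lambda>r. 3 * \<epsilon>\<^sup>2 * (mean_gap r)\<^sup>2 + 3 * \<theta>\<^sup>2)
      = 3 * \<epsilon>\<^sup>2 * integral {0..T} (\<lambda>r. (mean_gap r)\<^sup>2) + 3 * \<theta>\<^sup>2 * T"
    using integral_cmult_add_const[OF integrable_mean_gap_sq] s by simp
  finally show ?thesis
    unfolding C_def by (simp add: add.assoc)
qed

lemma sq_dist_le:
  assumes "i < N" and t: "t \<in> {0..T}"
  shows "sq_dist i t \<le> exp (fhn_rate \<xi> \<nu> \<alpha> \<beta> * T) * (1 + 3 * \<epsilon>\<^sup>2 * T * exp ((fhn_rate \<xi> \<nu> \<alpha> \<beta> + 3 * \<epsilon>\<^sup>2) * T))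
    * (\<eta>\<^sup>2 + 3 * \<epsilon>\<^sup>2 * integral {0..T} (\<lambda>s. (mean_gap s)\<^sup>2) + 3 * \<theta>\<^sup>2 * T)"
proof -
  define C where "C = fhn_rate \<xi> \<nu> \<alpha> \<beta>"
  define Q where "Q = integral {0..T} (\<lambda>s. (mean_gap s)\<^sup>2)"
  define R where "R = \<eta>\<^sup>2 + 3 * \<epsilon>\<^sup>2 * Q + 3 * \<theta>\<^sup>2 * T"
  define B where "B = 3 * \<epsilon>\<^sup>2 * (exp ((C + 3 * \<epsilon>\<^sup>2) * T) * R) + 3 * \<theta>\<^sup>2"
  have T: "0 \<le> T"
    using t by simp
  have "0 \<le> Q"
    unfolding Q_def by (intro integral_nonneg integrable_mean_gap_sq) simp
  have "sq_dist i t \<le> exp (C * T) * (sq_dist i 0 + integral {0..T} (\<lambda>r. 3 * \<epsilon>\<^sup>2 * (mean_gap r)\<^sup>2 + B))"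
  proof (rule gronwall_bound[OF _ _ _ _ _ t])
    fix r assume r: "r \<in> {0..T}"
    have "3 * \<epsilon>\<^sup>2 * mean_sq_dist r \<le> 3 * \<epsilon>\<^sup>2 * (exp ((C + 3 * \<epsilon>\<^sup>2) * T) * R)"
      using mean_sq_dist_le[OF r] unfolding C_def R_def Q_def by (intro mult_left_mono) auto
    then show "\<exists>u'. (sq_dist i has_real_derivative u') (at r within {0..T})
        \<and> u' \<le> C * sq_dist i r + (3 * \<epsilon>\<^sup>2 * (mean_gap r)\<^sup>2 + B)"
      using sq_dist_deriv[OF \<open>i < N\<close> r] unfolding B_def C_def by fastforce
  next
    show "0 \<le> 3 * \<epsilon>\<^sup>2 * (mean_gap r)\<^sup>2 + B" for r
      unfolding B_def R_def using \<open>0 \<le> Q\<close> T by simp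
  qed (use sq_dist_nonneg in \<open>auto intro!: continuous_intros continuous_on_mean_gap simp: C_def fhn_rate_nonneg\<close>)
  also have "integral {0..T} (\<lambda>r. 3 * \<epsilon>\<^sup>2 * (mean_gap r)\<^sup>2 + B) = 3 * \<epsilon>\<^sup>2 * Q + B * T"
    unfolding Q_def using integral_cmult_add_const[OF integrable_mean_gap_sq T] .
  also have "sq_dist i 0 + (3 * \<epsilon>\<^sup>2 * Q + B * T) \<le> (1 + 3 * \<epsilon>\<^sup>2 * T * exp ((C + 3 * \<epsilon>\<^sup>2) * T)) * R"
    using init[OF \<open>i < N\<close>] unfolding R_def B_def sq_dist_def by (simp add: algebra_simps)
  finally show ?thesis
    unfolding C_def[symmetric] Q_def[symmetric] R_def[symmetric] by (simp add: mult_left_mono mult.assoc)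
qed

end

section \<open>The particle system and its mean-field limit\<close>

locale fhn_mean_field = prob_space M for M :: "'a measure" +
  fixes \<xi> \<delta> \<nu> \<epsilon> \<mu> \<sigma> \<alpha> \<beta> \<gamma> T :: real
    and I x0 y0 :: "nat \<Rightarrow> 'a \<Rightarrow> real"
    and x y :: "nat \<Rightarrow> nat \<Rightarrow> 'a \<Rightarrow> real \<Rightarrow> real"
    and xh yh :: "nat \<Rightarrow> 'a \<Rightarrow> real \<Rightarrow> real"
    and i :: nat
  assumes delta: "\<delta> < 0"
    and T: "T > 0"
    and indep: "indep_vars (\<lambda>_. borel)
                  (\<lambda>k. case k of Inl j \<Rightarrow> (\<lambda>\<omega>. (I j \<omega>, 0::real))
                               | Inr j \<Rightarrow> (\<lambda>\<omega>. (x0 j \<omega>, y0 j \<omega>))) UNIV"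
    and gauss: "\<And>j. distributed M lborel (I j) std_normal_density"
    and iid_init: "\<And>j. distr M borel (\<lambda>\<omega>. (x0 j \<omega>, y0 j \<omega>)) = distr M borel (\<lambda>\<omega>. (x0 0 \<omega>, y0 0 \<omega>))"
    and mom_x: "integrable M (\<lambda>\<omega>. (x0 0 \<omega>)^2)"
    and mom_y: "integrable M (\<lambda>\<omega>. (y0 0 \<omega>)^2)"
    and ode_x: "\<And>N j \<omega> t. N \<ge> 1 \<Longrightarrow> j < N \<Longrightarrow> \<omega> \<in> space M \<Longrightarrow> t \<in> {0..T} \<Longrightarrow>
       (x N j \<omega> has_real_derivative
          (\<xi> * x N j \<omega> t + \<delta> * (x N j \<omega> t)^3 + \<nu> * y N j \<omega> t
           + \<epsilon> * ((\<Sum>k<N. x N k \<omega> t) / real N) + \<mu> + \<sigma> * I j \<omega>)) (at t within {0..T})"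
    and ode_y: "\<And>N j \<omega> t. N \<ge> 1 \<Longrightarrow> j < N \<Longrightarrow> \<omega> \<in> space M \<Longrightarrow> t \<in> {0..T} \<Longrightarrow>
       (y N j \<omega> has_real_derivative (\<alpha> * (x N j \<omega> t + \<beta> * y N j \<omega> t + \<gamma>))) (at t within {0..T})"
    and init: "\<And>N j \<omega>. N \<ge> 1 \<Longrightarrow> j < N \<Longrightarrow> \<omega> \<in> space M \<Longrightarrow>
       x N j \<omega> 0 = x0 j \<omega> \<and> y N j \<omega> 0 = y0 j \<omega>"
    and mf_x: "\<And>j \<omega> t. \<omega> \<in> space M \<Longrightarrow> t \<in> {0..T} \<Longrightarrow>
       (xh j \<omega> has_real_derivative
          (\<xi> * xh j \<omega> t + \<delta> * (xh j \<omega> t)^3 + \<nu> * yh j \<omega> t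
           + \<epsilon> * expectation (\<lambda>\<omega>'. xh j \<omega>' t) + \<mu> + \<sigma> * I j \<omega>)) (at t within {0..T})"
    and mf_y: "\<And>j \<omega> t. \<omega> \<in> space M \<Longrightarrow> t \<in> {0..T} \<Longrightarrow>
       (yh j \<omega> has_real_derivative (\<alpha> * (xh j \<omega> t + \<beta> * yh j \<omega> t + \<gamma>))) (at t within {0..T})"
    and mf_init: "\<And>j \<omega>. \<omega> \<in> space M \<Longrightarrow> xh j \<omega> 0 = x0 j \<omega> \<and> yh j \<omega> 0 = y0 j \<omega>"
begin

definition data :: "nat \<Rightarrow> 'a \<Rightarrow> real \<times> real \<times> real" where
  "data j \<omega> = (I j \<omega>, x0 j \<omega>, y0 j \<omega>)"

lemma
  shows measurable_current [measurable]: "I j \<in> borel_measurable M"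
    and measurable_x0 [measurable]: "x0 j \<in> borel_measurable M"
    and measurable_y0 [measurable]: "y0 j \<in> borel_measurable M"
proof -
  have "random_variable borel (case k of Inl j \<Rightarrow> (\<lambda>\<omega>. (I j \<omega>, 0::real))
      | Inr j \<Rightarrow> (\<lambda>\<omega>. (x0 j \<omega>, y0 j \<omega>)))" for k
    using indep unfolding indep_vars_def by blast
  from this[of "Inl j"] this[of "Inr j"]
  have "(\<lambda>\<omega>. (I j \<omega>, 0::real)) \<in> M \<rightarrow>\<^sub>M borel \<Otimes>\<^sub>M borel"
    "(\<lambda>\<omega>. (x0 j \<omega>, y0 j \<omega>)) \<in> M \<rightarrow>\<^sub>M borel \<Otimes>\<^sub>M borel"
    by (simp_all add: borel_prod)
  then show "I j \<in> borel_measurable M" "x0 j \<in> borel_measurable M" "y0 j \<in> borel_measurable M"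
    by (simp_all add: measurable_pair_iff comp_def)
qed

lemma measurable_data [measurable]: "data j \<in> borel_measurable M"
  unfolding data_def by measurable

lemma dist_data_sq:
  "(dist (data j \<omega>) (data k \<omega>'))\<^sup>2 = (I j \<omega> - I k \<omega>')\<^sup>2 + (x0 j \<omega> - x0 k \<omega>')\<^sup>2 + (y0 j \<omega> - y0 k \<omega>')\<^sup>2"
  by (simp add: data_def dist_Pair_Pair dist_real_def)

lemma indep_data:
  assumes "j \<noteq> k"
  shows "indep_var borel (data j) borel (data k)"
proof -
  define X where "X = (\<lambda>k. case k of Inl j \<Rightarrow> (\<lambda>\<omega>. (I j \<omega>, 0::real)) | Inr j \<Rightarrow> (\<lambda>\<omega>. (x0 j \<omega>, y0 j \<omega>)))"
  define g where "g j f = (fst (f (Inl j)), f (Inr j) :: real \<times> real)" for j and f :: "nat + nat \<Rightarrow> real \<times> real"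
  have "indep_var (PiM {Inl j, Inr j} (\<lambda>_. borel)) (\<lambda>\<omega>. restrict (\<lambda>l. X l \<omega>) {Inl j, Inr j})
                  (PiM {Inl k, Inr k} (\<lambda>_. borel)) (\<lambda>\<omega>. restrict (\<lambda>l. X l \<omega>) {Inl k, Inr k})"
    using indep assms unfolding X_def by (intro indep_var_restrict) auto
  moreover have "g l \<in> PiM {Inl l, Inr l} (\<lambda>_. borel) \<rightarrow>\<^sub>M borel" for l
  proof -
    have c1: "(\<lambda>f. f (Inl l)) \<in> PiM {Inl l, Inr l} (\<lambda>_. borel) \<rightarrow>\<^sub>M (borel :: (real \<times> real) measure)"
      and c2: "(\<lambda>f. f (Inr l)) \<in> PiM {Inl l, Inr l} (\<lambda>_. borel) \<rightarrow>\<^sub>M (borel :: (real \<times> real) measure)"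
      by (auto intro!: measurable_component_singleton)
    have "(fst :: real \<times> real \<Rightarrow> real) \<in> borel_measurable borel"
      by (intro borel_measurable_continuous_onI continuous_on_fst continuous_on_id)
    from measurable_compose[OF c1 this] c2 show ?thesis
      unfolding g_def by (rule borel_measurable_Pair)
  qed
  ultimately have "indep_var borel (g j \<circ> (\<lambda>\<omega>. restrict (\<lambda>l. X l \<omega>) {Inl j, Inr j}))
                  borel (g k \<circ> (\<lambda>\<omega>. restrict (\<lambda>l. X l \<omega>) {Inl k, Inr k}))"
    by (intro indep_var_compose) auto
  moreover have "g l \<circ> (\<lambda>\<omega>. restrict (\<lambda>l. X l \<omega>) {Inl l, Inr l}) = data l" for l
    by (auto simp: fun_eq_iff g_def X_def data_def)
  ultimately show ?thesis
    by simp
qed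

lemma distr_data: "distr M borel (data j) = distr M borel (data k)"
proof -
  define D where "D l \<omega> = ((I l \<omega>, 0::real), (x0 l \<omega>, y0 l \<omega>))" for l \<omega>
  define h :: "(real \<times> real) \<times> real \<times> real \<Rightarrow> real \<times> real \<times> real"
    where "h p = (fst (fst p), snd p)" for p
  have [measurable]: "h \<in> borel_measurable borel"
    unfolding h_def by (intro borel_measurable_continuous_onI continuous_intros)
  have [measurable]: "D l \<in> borel_measurable M" for l
    unfolding D_def by measurable
  have "distr M borel (\<lambda>\<omega>. I l \<omega>) = density lborel std_normal_density" for l
    using distributed_distr_eq_density[OF gauss[of l]] distr_cong[of M M borel lborel "I l" "I l"] by simp
  then have "distr M borel (\<lambda>\<omega>. (I l \<omega>, 0::real)) = distr (density lborel std_normal_density) borel (\<lambda>a. (a, 0::real))" for l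
    using distr_distr[of "\<lambda>a. (a, 0::real)" borel borel "I l" M] by (simp add: comp_def)
  moreover have "distr M borel (D l) = distr M borel (\<lambda>\<omega>. (I l \<omega>, 0::real)) \<Otimes>\<^sub>M distr M borel (\<lambda>\<omega>. (x0 l \<omega>, y0 l \<omega>))" for l
    using indep_vars_imp_indep_var[OF indep, of "Inl l" "Inr l"]
    unfolding indep_var_distribution_eq D_def[abs_def] by (simp add: borel_prod)
  ultimately have "distr M borel (D j) = distr M borel (D k)"
    using iid_init[of j] iid_init[of k] by simp
  moreover have "distr M borel (data l) = distr (distr M borel (D l)) borel h" for l
    by (subst distr_distr) (auto simp: comp_def h_def D_def data_def[abs_def])
  ultimately show ?thesis
    by simp
qed

lemma integral_data_eq:
  fixes h :: "real \<times> real \<times> real \<Rightarrow> real"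
  assumes [measurable]: "h \<in> borel_measurable borel"
  shows "expectation (\<lambda>\<omega>. h (data j \<omega>)) = expectation (\<lambda>\<omega>. h (data k \<omega>))"
  using integral_distr[of "data j" M borel h] integral_distr[of "data k" M borel h]
  by (simp add: distr_data[of j k])

lemma AE_data_in:
  assumes "A \<in> sets borel" and "\<And>\<omega>. \<omega> \<in> space M \<Longrightarrow> data k \<omega> \<in> A"
  shows "AE \<omega> in M. data j \<omega> \<in> A"
proof -
  have "AE d in distr M borel (data k). d \<in> A"
    using assms by (subst AE_distr_iff) auto
  then show ?thesis
    using assms by (subst (asm) distr_data[of k j]) (simp add: AE_distr_iff)
qed

lemma integrable_sq_data:
  shows "integrable M (\<lambda>\<omega>. (I j \<omega>)\<^sup>2)" "integrable M (\<lambda>\<omega>. (x0 j \<omega>)\<^sup>2)" "integrable M (\<lambda>\<omega>. (y0 j \<omega>)\<^sup>2)"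
proof -
  show "integrable M (\<lambda>\<omega>. (I j \<omega>)\<^sup>2)"
    using distributed_integrable[OF gauss[of j], of "\<lambda>x. x\<^sup>2"] integrable_std_normal_moment[of 2]
    by (simp add: std_normal_density_def)
  have [measurable]: "(\<lambda>p::real \<times> real. (fst p)\<^sup>2) \<in> borel_measurable borel"
    "(\<lambda>p::real \<times> real. (snd p)\<^sup>2) \<in> borel_measurable borel"
    by (intro borel_measurable_continuous_onI continuous_intros)+
  have "integrable (distr M borel (\<lambda>\<omega>. (x0 l \<omega>, y0 l \<omega>))) g \<longleftrightarrow> integrable M (\<lambda>\<omega>. g (x0 l \<omega>, y0 l \<omega>))"
    if [measurable]: "g \<in> borel_measurable borel" for l and g :: "real \<times> real \<Rightarrow> real"
    by (rule integrable_distr_eq) measurable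
  from this[of "\<lambda>p. (fst p)\<^sup>2" j] this[of "\<lambda>p. (fst p)\<^sup>2" 0]
    this[of "\<lambda>p. (snd p)\<^sup>2" j] this[of "\<lambda>p. (snd p)\<^sup>2" 0]
  show "integrable M (\<lambda>\<omega>. (x0 j \<omega>)\<^sup>2)" "integrable M (\<lambda>\<omega>. (y0 j \<omega>)\<^sup>2)"
    unfolding iid_init[of j] using mom_x mom_y by simp_all
qed

lemma integrable_sq_dist_data: "integrable M (\<lambda>\<omega>. (dist (data j \<omega>) d)\<^sup>2)"
proof -
  have sq_shift: "integrable M (\<lambda>\<omega>. (X \<omega> - a)\<^sup>2)"
    if [measurable]: "X \<in> borel_measurable M" and "integrable M (\<lambda>\<omega>. (X \<omega>)\<^sup>2)" for X and a :: real
  proof -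
    have "integrable M X"
      by (rule square_integrable_imp_integrable[OF that])
    with that(2) show ?thesis
      by (simp add: power2_diff)
  qed
  obtain a b c where "d = (a, b, c)"
    by (cases d) auto
  then have "(dist (data j \<omega>) d)\<^sup>2 = (I j \<omega> - a)\<^sup>2 + (x0 j \<omega> - b)\<^sup>2 + (y0 j \<omega> - c)\<^sup>2" for \<omega>
    by (simp add: data_def dist_Pair_Pair dist_real_def)
  moreover have "integrable M (\<lambda>\<omega>. (I j \<omega> - a)\<^sup>2 + (x0 j \<omega> - b)\<^sup>2 + (y0 j \<omega> - c)\<^sup>2)"
    using sq_shift[OF _ integrable_sq_data(1)] sq_shift[OF _ integrable_sq_data(2)]
      sq_shift[OF _ integrable_sq_data(3)] by (intro Bochner_Integration.integrable_add) auto
  ultimately show ?thesis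
    by simp
qed

definition lip :: real where
  "lip = sqrt (exp (fhn_rate \<xi> \<nu> \<alpha> \<beta> * T) * (1 + T * \<sigma>\<^sup>2))"

lemma lip_nonneg: "0 \<le> lip"
  using T by (simp add: lip_def)

lemma mean_field_sq_dist_le:
  assumes \<omega>: "\<omega> \<in> space M" and \<omega>': "\<omega>' \<in> space M" and t: "t \<in> {0..T}"
  shows "(xh j \<omega> t - xh j \<omega>' t)\<^sup>2 + (yh j \<omega> t - yh j \<omega>' t)\<^sup>2 \<le> (lip * dist (data j \<omega>) (data j \<omega>'))\<^sup>2"
proof -
  define C where "C = fhn_rate \<xi> \<nu> \<alpha> \<beta>"
  define u where "u s = (xh j \<omega> s - xh j \<omega>' s)\<^sup>2 + (yh j \<omega> s - yh j \<omega>' s)\<^sup>2" for s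
  define c where "c = \<sigma>\<^sup>2 * (I j \<omega> - I j \<omega>')\<^sup>2"
  have "u t \<le> exp (C * T) * (u 0 + integral {0..T} (\<lambda>_. c))"
  proof (rule gronwall_bound[OF _ _ _ _ _ t])
    fix s assume s: "s \<in> {0..T}"
    define m where "m = \<epsilon> * expectation (\<lambda>\<omega>'. xh j \<omega>' s) + \<mu>"
    have "(m + \<sigma> * I j \<omega> - (m + \<sigma> * I j \<omega>'))\<^sup>2 = c"
      unfolding c_def by (simp add: power2_eq_square algebra_simps)
    moreover have dx: "(xh j \<omega>'' has_real_derivative \<xi> * xh j \<omega>'' s + \<delta> * (xh j \<omega>'' s) ^ 3
        + \<nu> * yh j \<omega>'' s + (m + \<sigma> * I j \<omega>'')) (at s within {0..T})" if "\<omega>'' \<in> space M" for \<omega>''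
      using mf_x[OF that s] by (simp add: m_def add.assoc)
    ultimately show "\<exists>u'. (u has_real_derivative u') (at s within {0..T}) \<and> u' \<le> C * u s + c"
      using fhn_sq_dist_deriv[OF _ dx[OF \<omega>] mf_y[OF \<omega> s] dx[OF \<omega>'] mf_y[OF \<omega>' s]] delta
      unfolding u_def[abs_def] C_def by fastforce
  qed (auto simp: C_def fhn_rate_nonneg c_def u_def)
  also have "\<dots> = exp (C * T) * ((x0 j \<omega> - x0 j \<omega>')\<^sup>2 + (y0 j \<omega> - y0 j \<omega>')\<^sup>2 + T * c)"
    using mf_init[OF \<omega>] mf_init[OF \<omega>'] T by (simp add: u_def)
  also have "\<dots> \<le> exp (C * T) * ((1 + T * \<sigma>\<^sup>2) * (dist (data j \<omega>) (data j \<omega>'))\<^sup>2)"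
    unfolding dist_data_sq c_def using T
    by (intro mult_left_mono) (auto simp: algebra_simps)
  also have "\<dots> = (lip * dist (data j \<omega>) (data j \<omega>'))\<^sup>2"
    using T by (simp add: lip_def C_def power_mult_distrib)
  finally show ?thesis
    unfolding u_def .
qed

lemma mean_field_lipschitz:
  assumes "\<omega> \<in> space M" "\<omega>' \<in> space M" "t \<in> {0..T}"
  shows "\<bar>xh j \<omega> t - xh j \<omega>' t\<bar> \<le> lip * dist (data j \<omega>) (data j \<omega>')"
proof (rule power2_le_imp_le)
  show "\<bar>xh j \<omega> t - xh j \<omega>' t\<bar>\<^sup>2 \<le> (lip * dist (data j \<omega>) (data j \<omega>'))\<^sup>2"
    using mean_field_sq_dist_le[OF assms, of j] zero_le_power2[of "yh j \<omega> t - yh j \<omega>' t"]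
    by (simp only: power2_abs)
qed (simp add: lip_nonneg)

definition data_range :: "(real \<times> real \<times> real) set" where
  "data_range = data i ` space M"

definition profile :: "real \<Rightarrow> real \<times> real \<times> real \<Rightarrow> real" where
  "profile t = (SOME g. lip-lipschitz_on (closure data_range) g \<and> (\<forall>\<omega>\<in>space M. g (data i \<omega>) = xh i \<omega> t))"

lemma profile:
  assumes "t \<in> {0..T}"
  shows "lip-lipschitz_on (closure data_range) (profile t) \<and> (\<forall>\<omega>\<in>space M. profile t (data i \<omega>) = xh i \<omega> t)"
proof -
  have "\<exists>g. lip-lipschitz_on (closure (data i ` space M)) g \<and> (\<forall>\<omega>\<in>space M. g (data i \<omega>) = xh i \<omega> t)"
    by (rule lipschitz_factor_through_closure[OF lip_nonneg]) (rule mean_field_lipschitz[OF _ _ assms])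
  then show ?thesis
    unfolding profile_def data_range_def by (rule someI_ex)
qed

text \<open>\<open>mf_path d\<close> is the mean-field path as a function of the data \<open>d\<close> of the particle, extended
  by \<open>0\<close> off the closure of the range of the data; evaluated at \<open>data j\<close> it gives i.i.d. copies
  of \<open>xh i\<close>.\<close>

definition mf_path :: "real \<times> real \<times> real \<Rightarrow> real \<Rightarrow> real" where
  "mf_path d t = (if d \<in> closure data_range \<and> t \<in> {0..T} then profile t d else 0)"

lemma mf_path_data: "\<omega> \<in> space M \<Longrightarrow> t \<in> {0..T} \<Longrightarrow> mf_path (data i \<omega>) t = xh i \<omega> t"
  using profile[of t] closure_subset[of data_range] by (auto simp: mf_path_def data_range_def)

lemma lipschitz_mf_path: "lip-lipschitz_on (closure data_range) (\<lambda>d. mf_path d t)"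
proof (cases "t \<in> {0..T}")
  case True
  then show ?thesis
    using profile[OF True] by (auto simp: mf_path_def intro: lipschitz_on_transform)
next
  case False
  then show ?thesis
    using lip_nonneg by (auto simp: mf_path_def lipschitz_on_def)
qed

lemma continuous_on_xh: "\<omega> \<in> space M \<Longrightarrow> continuous_on {0..T} (xh j \<omega>)"
  by (metis DERIV_continuous continuous_on_eq_continuous_within mf_x)

lemma continuous_on_mf_path:
  "continuous_on (closure data_range \<times> {0..T}) (\<lambda>p. mf_path (fst p) (snd p))"
proof (rule continuous_on_closure_Times_lipschitz[OF lipschitz_mf_path])
  fix d assume "d \<in> data_range"
  then obtain \<omega> where "\<omega> \<in> space M" "d = data i \<omega>"
    unfolding data_range_def by blast
  then show "continuous_on {0..T} (mf_path d)"
    using continuous_on_eq[OF continuous_on_xh] by (simp add: mf_path_data)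
qed

lemma continuous_on_mf_path_time: "continuous_on {0..T} (mf_path d)"
proof (cases "d \<in> closure data_range")
  case True
  then show ?thesis
    using continuous_on_compose2[OF continuous_on_mf_path
        continuous_on_Pair[OF continuous_on_const continuous_on_id, of "{0..T}" d]]
    by fastforce
next
  case False
  then show ?thesis
    by (simp add: mf_path_def)
qed

lemma measurable_mf_path [measurable]: "(\<lambda>p. mf_path (fst p) (snd p)) \<in> borel_measurable borel"
proof -
  have "(\<lambda>p. if p \<in> closure data_range \<times> {0..T} then mf_path (fst p) (snd p) else 0) \<in> borel_measurable borel"
    by (rule borel_measurable_continuous_on_if) (auto intro!: continuous_on_mf_path borel_closed closed_Times)
  moreover have "(\<lambda>p. if p \<in> closure data_range \<times> {0..T} then mf_path (fst p) (snd p) else 0)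
      = (\<lambda>p. mf_path (fst p) (snd p))"
    by (auto simp: fun_eq_iff mf_path_def)
  ultimately show ?thesis
    by simp
qed

lemma measurable_mf_path_at [measurable]: "(\<lambda>d. mf_path d t) \<in> borel_measurable borel"
  using measurable_compose[OF _ measurable_mf_path, of "\<lambda>d. (d, t)" borel] by simp

definition sample :: 'a where
  "sample = (SOME \<omega>. \<omega> \<in> space M)"

lemma sample_in_space: "sample \<in> space M"
  unfolding sample_def using not_empty by (simp add: some_in_eq)

definition envelope :: "real \<times> real \<times> real \<Rightarrow> real" where
  "envelope d = (SUP t\<in>{0..T}. \<bar>xh i sample t\<bar>) + lip * dist d (data i sample)"

lemma measurable_envelope [measurable]: "envelope \<in> borel_measurable borel"
  unfolding envelope_def by (intro borel_measurable_continuous_onI continuous_intros)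

lemma abs_mf_path_le_envelope: "\<bar>mf_path d t\<bar> \<le> envelope d"
proof -
  define B where "B = (SUP t\<in>{0..T}. \<bar>xh i sample t\<bar>)"
  have "continuous_on {0..T} (\<lambda>t. \<bar>xh i sample t\<bar>)"
    using continuous_on_xh[OF sample_in_space] by (rule continuous_on_rabs)
  then have "bdd_above ((\<lambda>t. \<bar>xh i sample t\<bar>) ` {0..T})"
    by (intro bounded_imp_bdd_above compact_imp_bounded compact_continuous_image compact_Icc)
  then have B: "\<bar>xh i sample t\<bar> \<le> B" if "t \<in> {0..T}" for t
    unfolding B_def by (rule cSUP_upper[OF that])
  have "\<bar>xh i sample 0\<bar> \<le> B"
    by (rule B) (use T in simp)
  then have "0 \<le> B"
    using abs_ge_zero[of "xh i sample 0"] by linarith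
  show ?thesis
  proof (cases "d \<in> closure data_range \<and> t \<in> {0..T}")
    case True
    have d0: "data i sample \<in> closure data_range"
      using sample_in_space closure_subset[of "data i ` space M"] unfolding data_range_def by auto
    have "\<bar>mf_path d t\<bar> \<le> \<bar>mf_path d t - mf_path (data i sample) t\<bar> + \<bar>mf_path (data i sample) t\<bar>"
      using abs_triangle_ineq[of "mf_path d t - mf_path (data i sample) t" "mf_path (data i sample) t"] by simp
    also have "\<bar>mf_path d t - mf_path (data i sample) t\<bar> \<le> lip * dist d (data i sample)"
      using lipschitz_onD[OF lipschitz_mf_path, of d "data i sample" t] True d0 by (simp add: dist_real_def)
    also have "\<bar>mf_path (data i sample) t\<bar> \<le> B"
      using B True by (simp add: mf_path_data sample_in_space)
    finally show ?thesis
      unfolding envelope_def B_def[symmetric] by linarith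
  next
    case False
    then have "mf_path d t = 0"
      unfolding mf_path_def by auto
    moreover have "0 \<le> envelope d"
      unfolding envelope_def B_def[symmetric] using \<open>0 \<le> B\<close> lip_nonneg by simp
    ultimately show ?thesis
      by simp
  qed
qed

lemma integrable_envelope_sq: "integrable M (\<lambda>\<omega>. (envelope (data j \<omega>))\<^sup>2)"
proof -
  define B where "B = (SUP t\<in>{0..T}. \<bar>xh i sample t\<bar>)"
  have "integrable M (\<lambda>\<omega>. dist (data j \<omega>) (data i sample))"
    by (rule square_integrable_imp_integrable[OF _ integrable_sq_dist_data]) measurable
  then have "integrable M (\<lambda>\<omega>. B\<^sup>2 + 2 * B * lip * dist (data j \<omega>) (data i sample)
      + lip\<^sup>2 * (dist (data j \<omega>) (data i sample))\<^sup>2)"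
    using integrable_sq_dist_data by simp
  then show ?thesis
    by (simp add: envelope_def B_def power2_sum power_mult_distrib algebra_simps)
qed

lemma integrable_envelope: "integrable M (\<lambda>\<omega>. envelope (data j \<omega>))"
  by (rule square_integrable_imp_integrable[OF _ integrable_envelope_sq]) measurable

lemma abs_mf_path_le_abs_envelope: "\<bar>mf_path d t\<bar> \<le> \<bar>envelope d\<bar>"
  using abs_mf_path_le_envelope[of d t] abs_ge_self[of "envelope d"] by linarith

lemma integrable_mf_path: "integrable M (\<lambda>\<omega>. mf_path (data j \<omega>) t)"
proof (rule Bochner_Integration.integrable_bound[OF integrable_envelope])
  show "AE \<omega> in M. norm (mf_path (data j \<omega>) t) \<le> norm (envelope (data j \<omega>))"
    using abs_mf_path_le_abs_envelope by (intro AE_I2) simp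
qed measurable

lemma integrable_mf_path_sq: "integrable M (\<lambda>\<omega>. (mf_path (data j \<omega>) t)\<^sup>2)"
proof (rule Bochner_Integration.integrable_bound[OF integrable_envelope_sq])
  show "AE \<omega> in M. norm ((mf_path (data j \<omega>) t)\<^sup>2) \<le> norm ((envelope (data j \<omega>))\<^sup>2)"
    using abs_mf_path_le_abs_envelope by (intro AE_I2) (simp add: abs_le_square_iff)
qed measurable

definition mf_mean :: "real \<Rightarrow> real" where
  "mf_mean t = expectation (\<lambda>\<omega>. mf_path (data i \<omega>) t)"

lemma expectation_xh: "t \<in> {0..T} \<Longrightarrow> expectation (\<lambda>\<omega>. xh i \<omega> t) = mf_mean t"
  unfolding mf_mean_def by (rule Bochner_Integration.integral_cong) (auto simp: mf_path_data)

lemma expectation_mf_path: "expectation (\<lambda>\<omega>. mf_path (data j \<omega>) t) = mf_mean t"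
  unfolding mf_mean_def by (rule integral_data_eq) measurable

lemma continuous_on_mf_mean: "continuous_on {0..T} mf_mean"
proof (rule continuous_on_sequentiallyI)
  fix u a assume "\<forall>n. u n \<in> {0..T}" "a \<in> {0..T}" "u \<longlonglongrightarrow> a"
  then have lim: "(\<lambda>n. mf_path d (u n)) \<longlonglongrightarrow> mf_path d a" for d
    using continuous_on_mf_path_time[of d] unfolding continuous_on_sequentially comp_def by blast
  show "(\<lambda>n. mf_mean (u n)) \<longlonglongrightarrow> mf_mean a"
    unfolding mf_mean_def
  proof (rule integral_dominated_convergence[OF _ _ integrable_envelope])
    show "AE \<omega> in M. (\<lambda>n. mf_path (data i \<omega>) (u n)) \<longlonglongrightarrow> mf_path (data i \<omega>) a"
      using lim by (intro AE_I2)
    show "AE \<omega> in M. norm (mf_path (data i \<omega>) (u n)) \<le> envelope (data i \<omega>)" for n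
      using abs_mf_path_le_envelope by (intro AE_I2) simp
  qed measurable
qed

definition envelope_moment :: real where
  "envelope_moment = expectation (\<lambda>\<omega>. (envelope (data i \<omega>))\<^sup>2)"

definition empirical_error :: "nat \<Rightarrow> 'a \<Rightarrow> real \<Rightarrow> real" where
  "empirical_error N \<omega> t = (\<Sum>j<N. mf_path (data j \<omega>) t) / real N - mf_mean t"

lemma expectation_empirical_error_sq:
  assumes "0 < N"
  shows "integrable M (\<lambda>\<omega>. (empirical_error N \<omega> t)\<^sup>2)"
    and "expectation (\<lambda>\<omega>. (empirical_error N \<omega> t)\<^sup>2) \<le> envelope_moment / real N"
proof -
  have var: "variance (\<lambda>\<omega>. mf_path (data j \<omega>) t) \<le> envelope_moment" for j
  proof -
    have "variance (\<lambda>\<omega>. mf_path (data j \<omega>) t) \<le> expectation (\<lambda>\<omega>. (mf_path (data j \<omega>) t)\<^sup>2)"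
      using variance_eq[OF integrable_mf_path integrable_mf_path_sq] by simp
    also have "\<dots> \<le> expectation (\<lambda>\<omega>. (envelope (data j \<omega>))\<^sup>2)"
      using abs_mf_path_le_abs_envelope
      by (intro integral_mono integrable_mf_path_sq integrable_envelope_sq) (simp add: abs_le_square_iff)
    also have "\<dots> = envelope_moment"
      unfolding envelope_moment_def by (rule integral_data_eq) measurable
    finally show ?thesis .
  qed
  have indep: "indep_var borel (\<lambda>\<omega>. mf_path (data j \<omega>) t) borel (\<lambda>\<omega>. mf_path (data k \<omega>) t)"
    if "j \<noteq> k" for j k
    using indep_var_compose[OF indep_data[OF that], of "\<lambda>d. mf_path d t" borel "\<lambda>d. mf_path d t" borel]
    by (simp add: comp_def)
  note empirical = expectation_sq_empirical_mean_le[of "\<lambda>j \<omega>. mf_path (data j \<omega>) t" "mf_mean t",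
      OF _ indep integrable_mf_path_sq expectation_mf_path var \<open>0 < N\<close>]
  show "integrable M (\<lambda>\<omega>. (empirical_error N \<omega> t)\<^sup>2)"
    "expectation (\<lambda>\<omega>. (empirical_error N \<omega> t)\<^sup>2) \<le> envelope_moment / real N"
    unfolding empirical_error_def by (rule empirical; measurable)+
qed

lemma continuous_on_empirical_error: "continuous_on {0..T} (empirical_error N \<omega>)"
  unfolding empirical_error_def divide_inverse
  by (intro continuous_on_diff continuous_on_mult_right continuous_on_sum
      continuous_on_mf_path_time continuous_on_mf_mean)

definition coupling_factor :: real where
  "coupling_factor = exp (fhn_rate \<xi> \<nu> \<alpha> \<beta> * T) * (1 + 3 * \<epsilon>\<^sup>2 * T * exp ((fhn_rate \<xi> \<nu> \<alpha> \<beta> + 3 * \<epsilon>\<^sup>2) * T))"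

lemma coupling_factor_nonneg: "0 \<le> coupling_factor"
  using T by (simp add: coupling_factor_def)

text \<open>Particle \<open>j\<close> is compared with the mean-field path of a sample point \<open>w j\<close> whose data is
  \<open>\<eta>\<close>-close to \<open>data j \<omega>\<close>; for \<open>j = i\<close> the sample point is \<open>\<omega>\<close> itself.\<close>

lemma comparison_mean_close:
  assumes N: "0 < real N"
    and w_space: "\<And>j. j < N \<Longrightarrow> w j \<in> space M"
    and w_close: "\<And>j. j < N \<Longrightarrow> dist (data i (w j)) (data j \<omega>) \<le> \<eta>"
    and in_closure: "\<And>j. j < N \<Longrightarrow> data j \<omega> \<in> closure data_range"
    and s: "s \<in> {0..T}"
  shows "\<bar>((\<Sum>k<N. xh i (w k) s) / real N - mf_mean s) - empirical_error N \<omega> s\<bar> \<le> lip * \<eta>"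
proof -
  have "\<bar>xh i (w k) s - mf_path (data k \<omega>) s\<bar> \<le> lip * \<eta>" if "k < N" for k
  proof -
    have "data i (w k) \<in> data_range"
      unfolding data_range_def using w_space[OF that] by simp
    then have "data i (w k) \<in> closure data_range"
      using closure_subset by blast
    then have "\<bar>xh i (w k) s - mf_path (data k \<omega>) s\<bar> \<le> lip * dist (data i (w k)) (data k \<omega>)"
      using lipschitz_onD[OF lipschitz_mf_path _ in_closure[OF that], of "data i (w k)" s]
        w_space[OF that] s
      by (simp add: mf_path_data dist_real_def)
    also have "\<dots> \<le> lip * \<eta>"
      using w_close[OF that] lip_nonneg by (rule mult_left_mono)
    finally show ?thesis .
  qed
  then have "\<bar>\<Sum>k<N. xh i (w k) s - mf_path (data k \<omega>) s\<bar> \<le> real N * (lip * \<eta>)"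
    using order_trans[OF sum_abs sum_bounded_above[of "{..<N}" "\<lambda>k. \<bar>xh i (w k) s - mf_path (data k \<omega>) s\<bar>"]]
    by simp
  moreover have "((\<Sum>k<N. xh i (w k) s) / real N - mf_mean s) - empirical_error N \<omega> s
      = (\<Sum>k<N. xh i (w k) s - mf_path (data k \<omega>) s) / real N"
    unfolding empirical_error_def by (simp add: sum_subtractf diff_divide_distrib)
  ultimately show ?thesis
    using N by (simp add: divide_le_eq mult.commute)
qed

lemma integral_sq_comparison_mean_le:
  assumes N: "0 < real N" and "0 \<le> \<eta>"
    and w_space: "\<And>j. j < N \<Longrightarrow> w j \<in> space M"
    and w_close: "\<And>j. j < N \<Longrightarrow> dist (data i (w j)) (data j \<omega>) \<le> \<eta>"
    and in_closure: "\<And>j. j < N \<Longrightarrow> data j \<omega> \<in> closure data_range"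
  shows "integral {0..T} (\<lambda>s. ((\<Sum>k<N. xh i (w k) s) / real N - mf_mean s)\<^sup>2)
    \<le> 2 * integral {0..T} (\<lambda>s. (empirical_error N \<omega> s)\<^sup>2) + 2 * (lip * \<eta>)\<^sup>2 * T"
proof -
  define A where "A s = (\<Sum>k<N. xh i (w k) s) / real N - mf_mean s" for s
  have A_close: "\<bar>A s - empirical_error N \<omega> s\<bar> \<le> lip * \<eta>" if "s \<in> {0..T}" for s
    unfolding A_def using comparison_mean_close[OF N w_space w_close in_closure that] .
  have "continuous_on {0..T} (xh i (w k))" if "k < N" for k
    using continuous_on_xh w_space[OF that] by blast
  then have A_cont: "continuous_on {0..T} A"
    unfolding A_def divide_inverse using N
    by (intro continuous_on_diff continuous_on_mult_right continuous_on_sum continuous_on_mf_mean) auto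
  have "integral {0..T} (\<lambda>s. (A s)\<^sup>2) \<le> integral {0..T} (\<lambda>s. 2 * (empirical_error N \<omega> s)\<^sup>2 + 2 * (lip * \<eta>)\<^sup>2)"
  proof (rule integral_le)
    show "(\<lambda>s. (A s)\<^sup>2) integrable_on {0..T}"
      by (intro integrable_continuous_interval continuous_intros A_cont)
    show "(\<lambda>s. 2 * (empirical_error N \<omega> s)\<^sup>2 + 2 * (lip * \<eta>)\<^sup>2) integrable_on {0..T}"
      by (intro integrable_continuous_interval continuous_intros continuous_on_empirical_error)
    fix s assume "s \<in> {0..T}"
    have "2 * (empirical_error N \<omega> s)\<^sup>2 + 2 * (A s - empirical_error N \<omega> s)\<^sup>2 - (A s)\<^sup>2
        = (A s - 2 * empirical_error N \<omega> s)\<^sup>2"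
      by (simp add: power2_eq_square algebra_simps)
    then have "(A s)\<^sup>2 \<le> 2 * (empirical_error N \<omega> s)\<^sup>2 + 2 * (A s - empirical_error N \<omega> s)\<^sup>2"
      using zero_le_power2[of "A s - 2 * empirical_error N \<omega> s"] by linarith
    also have "(A s - empirical_error N \<omega> s)\<^sup>2 \<le> (lip * \<eta>)\<^sup>2"
      using A_close[OF \<open>s \<in> {0..T}\<close>] lip_nonneg \<open>0 \<le> \<eta>\<close> by (simp add: abs_le_square_iff[symmetric])
    finally show "(A s)\<^sup>2 \<le> 2 * (empirical_error N \<omega> s)\<^sup>2 + 2 * (lip * \<eta>)\<^sup>2"
      by simp
  qed
  also have "\<dots> = 2 * integral {0..T} (\<lambda>s. (empirical_error N \<omega> s)\<^sup>2) + 2 * (lip * \<eta>)\<^sup>2 * T"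
    using T
    by (intro integral_cmult_add_const integrable_continuous_interval continuous_intros continuous_on_empirical_error) auto
  finally show ?thesis
    unfolding A_def .
qed

lemma particle_sq_error_le_approx:
  assumes "i < N" and \<omega>: "\<omega> \<in> space M" and "0 \<le> \<eta>"
    and w_space: "\<And>j. j < N \<Longrightarrow> w j \<in> space M"
    and w_close: "\<And>j. j < N \<Longrightarrow> dist (data i (w j)) (data j \<omega>) \<le> \<eta>"
    and "w i = \<omega>"
    and in_closure: "\<And>j. j < N \<Longrightarrow> data j \<omega> \<in> closure data_range"
    and t: "t \<in> {0..T}"
  shows "(x N i \<omega> t - xh i \<omega> t)\<^sup>2 + (y N i \<omega> t - yh i \<omega> t)\<^sup>2
    \<le> coupling_factor * (6 * \<epsilon>\<^sup>2 * integral {0..T} (\<lambda>s. (empirical_error N \<omega> s)\<^sup>2)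
        + (1 + 6 * \<epsilon>\<^sup>2 * T * lip\<^sup>2 + 3 * \<sigma>\<^sup>2 * T) * \<eta>\<^sup>2)"
proof -
  define A where "A s = (\<Sum>k<N. xh i (w k) s) / real N - mf_mean s" for s
  define Q where "Q = integral {0..T} (\<lambda>s. (empirical_error N \<omega> s)\<^sup>2)"
  have N: "0 < real N" "1 \<le> N"
    using \<open>i < N\<close> by auto
  have QA: "integral {0..T} (\<lambda>s. (A s)\<^sup>2) \<le> 2 * Q + 2 * (lip * \<eta>)\<^sup>2 * T"
    unfolding A_def Q_def using integral_sq_comparison_mean_le[OF N(1) \<open>0 \<le> \<eta>\<close> w_space w_close in_closure] .
  interpret coupled: fhn_coupled_paths \<xi> \<delta> \<nu> \<epsilon> \<alpha> \<beta> \<gamma> T \<eta> "\<bar>\<sigma>\<bar> * \<eta>" N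
    "\<lambda>j. x N j \<omega>" "\<lambda>j. y N j \<omega>" "\<lambda>j. xh i (w j)" "\<lambda>j. yh i (w j)"
    "\<lambda>j. \<mu> + \<sigma> * I j \<omega>" "\<lambda>j. \<mu> + \<sigma> * I i (w j)" mf_mean
  proof unfold_locales
    show "\<delta> \<le> 0"
      using delta by simp
    show "0 < N"
      using \<open>i < N\<close> by simp
    show "continuous_on {0..T} mf_mean"
      by (rule continuous_on_mf_mean)
    fix j s assume j: "j < N" and s: "s \<in> {0..T}"
    show "(x N j \<omega> has_real_derivative \<xi> * x N j \<omega> s + \<delta> * (x N j \<omega> s) ^ 3 + \<nu> * y N j \<omega> s
        + (\<epsilon> * ((\<Sum>k<N. x N k \<omega> s) / real N) + (\<mu> + \<sigma> * I j \<omega>))) (at s within {0..T})"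
      using ode_x[OF N(2) j \<omega> s] by (simp add: add.assoc)
    show "(y N j \<omega> has_real_derivative \<alpha> * (x N j \<omega> s + \<beta> * y N j \<omega> s + \<gamma>)) (at s within {0..T})"
      using ode_y[OF N(2) j \<omega> s] .
    show "(xh i (w j) has_real_derivative \<xi> * xh i (w j) s + \<delta> * (xh i (w j) s) ^ 3 + \<nu> * yh i (w j) s
        + (\<epsilon> * mf_mean s + (\<mu> + \<sigma> * I i (w j)))) (at s within {0..T})"
      using mf_x[OF w_space[OF j] s, of i] by (simp add: expectation_xh[OF s] add.assoc)
    show "(yh i (w j) has_real_derivative \<alpha> * (xh i (w j) s + \<beta> * yh i (w j) s + \<gamma>)) (at s within {0..T})"
      using mf_y[OF w_space[OF j] s] .
  next
    fix j assume j: "j < N"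
    have "(x N j \<omega> 0 - xh i (w j) 0)\<^sup>2 + (y N j \<omega> 0 - yh i (w j) 0)\<^sup>2 \<le> (dist (data i (w j)) (data j \<omega>))\<^sup>2"
      using init[OF N(2) j \<omega>] mf_init[OF w_space[OF j]] by (simp add: dist_data_sq power2_commute)
    also have "\<dots> \<le> \<eta>\<^sup>2"
      using w_close[OF j] by (simp add: power_mono)
    finally show "(x N j \<omega> 0 - xh i (w j) 0)\<^sup>2 + (y N j \<omega> 0 - yh i (w j) 0)\<^sup>2 \<le> \<eta>\<^sup>2" .
    have "(I j \<omega> - I i (w j))\<^sup>2 \<le> (dist (data i (w j)) (data j \<omega>))\<^sup>2"
      unfolding dist_data_sq by (simp add: power2_commute)
    then have "\<bar>I j \<omega> - I i (w j)\<bar> \<le> \<eta>"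
      using w_close[OF j] by (simp add: abs_le_square_iff[symmetric])
    then show "\<bar>\<mu> + \<sigma> * I j \<omega> - (\<mu> + \<sigma> * I i (w j))\<bar> \<le> \<bar>\<sigma>\<bar> * \<eta>"
      by (simp add: right_diff_distrib[symmetric] abs_mult mult_left_mono)
  qed
  have "(x N i \<omega> t - xh i (w i) t)\<^sup>2 + (y N i \<omega> t - yh i (w i) t)\<^sup>2
    \<le> coupling_factor * (\<eta>\<^sup>2 + 3 * \<epsilon>\<^sup>2 * integral {0..T} (\<lambda>s. (A s)\<^sup>2) + 3 * (\<bar>\<sigma>\<bar> * \<eta>)\<^sup>2 * T)"
    using coupled.sq_dist_le[OF \<open>i < N\<close> t]
    unfolding coupled.sq_dist_def coupled.mean_gap_def coupling_factor_def A_def .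
  also have "\<dots> \<le> coupling_factor * (\<eta>\<^sup>2 + 3 * \<epsilon>\<^sup>2 * (2 * Q + 2 * (lip * \<eta>)\<^sup>2 * T) + 3 * (\<bar>\<sigma>\<bar> * \<eta>)\<^sup>2 * T)"
    using QA coupling_factor_nonneg by (intro mult_left_mono) (auto intro: mult_left_mono)
  also have "\<eta>\<^sup>2 + 3 * \<epsilon>\<^sup>2 * (2 * Q + 2 * (lip * \<eta>)\<^sup>2 * T) + 3 * (\<bar>\<sigma>\<bar> * \<eta>)\<^sup>2 * T
      = 6 * \<epsilon>\<^sup>2 * Q + (1 + 6 * \<epsilon>\<^sup>2 * T * lip\<^sup>2 + 3 * \<sigma>\<^sup>2 * T) * \<eta>\<^sup>2"
    by (simp add: power_mult_distrib algebra_simps)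
  finally show ?thesis
    unfolding Q_def \<open>w i = \<omega>\<close> .
qed

lemma particle_sq_error_le:
  assumes "i < N" and \<omega>: "\<omega> \<in> space M"
    and in_closure: "\<And>j. j < N \<Longrightarrow> data j \<omega> \<in> closure data_range"
    and t: "t \<in> {0..T}"
  shows "(x N i \<omega> t - xh i \<omega> t)\<^sup>2 + (y N i \<omega> t - yh i \<omega> t)\<^sup>2
    \<le> 6 * \<epsilon>\<^sup>2 * coupling_factor * integral {0..T} (\<lambda>s. (empirical_error N \<omega> s)\<^sup>2)"
proof (rule le_if_le_add_sq)
  fix \<eta> :: real assume "0 < \<eta>"
  have "\<forall>j\<in>{..<N}. \<exists>\<omega>'. \<omega>' \<in> space M \<and> dist (data i \<omega>') (data j \<omega>) \<le> \<eta>"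
  proof
    fix j assume that: "j \<in> {..<N}"
    have "data j \<omega> \<in> closure data_range"
      using in_closure that by simp
    then have "\<exists>d\<in>data_range. dist d (data j \<omega>) < \<eta>"
      using \<open>0 < \<eta>\<close> by (simp add: closure_approachable)
    then obtain d where "d \<in> data_range" "dist d (data j \<omega>) < \<eta>"
      by blast
    moreover from \<open>d \<in> data_range\<close> obtain \<omega>' where "\<omega>' \<in> space M" "d = data i \<omega>'"
      unfolding data_range_def by auto
    ultimately show "\<exists>\<omega>'. \<omega>' \<in> space M \<and> dist (data i \<omega>') (data j \<omega>) \<le> \<eta>"
      by (intro exI[of _ \<omega>']) simp
  qed
  from bchoice[OF this] obtain w0
    where w0: "\<forall>j\<in>{..<N}. w0 j \<in> space M \<and> dist (data i (w0 j)) (data j \<omega>) \<le> \<eta>" ..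
  define w where "w j = (if j = i then \<omega> else w0 j)" for j
  have "(x N i \<omega> t - xh i \<omega> t)\<^sup>2 + (y N i \<omega> t - yh i \<omega> t)\<^sup>2
    \<le> coupling_factor * (6 * \<epsilon>\<^sup>2 * integral {0..T} (\<lambda>s. (empirical_error N \<omega> s)\<^sup>2)
        + (1 + 6 * \<epsilon>\<^sup>2 * T * lip\<^sup>2 + 3 * \<sigma>\<^sup>2 * T) * \<eta>\<^sup>2)"
    by (rule particle_sq_error_le_approx[OF \<open>i < N\<close> \<omega> _ _ _ _ in_closure t, of \<eta> w])
       (use w0 \<omega> \<open>0 < \<eta>\<close> in \<open>simp_all add: w_def\<close>)
  then show "(x N i \<omega> t - xh i \<omega> t)\<^sup>2 + (y N i \<omega> t - yh i \<omega> t)\<^sup>2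
    \<le> 6 * \<epsilon>\<^sup>2 * coupling_factor * integral {0..T} (\<lambda>s. (empirical_error N \<omega> s)\<^sup>2)
      + coupling_factor * (1 + 6 * \<epsilon>\<^sup>2 * T * lip\<^sup>2 + 3 * \<sigma>\<^sup>2 * T) * \<eta>\<^sup>2"
    by (simp add: distrib_left mult_ac)
qed

lemma sup_error_le:
  assumes "i < N" and "\<omega> \<in> space M" and "\<And>j. j < N \<Longrightarrow> data j \<omega> \<in> closure data_range"
  shows "(SUP t\<in>{0..T}. \<bar>x N i \<omega> t - xh i \<omega> t\<bar>) + (SUP t\<in>{0..T}. \<bar>y N i \<omega> t - yh i \<omega> t\<bar>)
    \<le> 2 * sqrt (6 * \<epsilon>\<^sup>2 * coupling_factor * integral {0..T} (\<lambda>s. (empirical_error N \<omega> s)\<^sup>2))"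
proof (rule SUP_abs_add_SUP_abs_le)
  show "{0..T} \<noteq> {}"
    using T by simp
qed (rule particle_sq_error_le[OF assms])

lemma AE_data_in_closure: "AE \<omega> in M. \<forall>j\<in>{..<N}. data j \<omega> \<in> closure data_range"
proof (rule AE_finite_allI)
  fix j
  have "data i \<omega> \<in> closure data_range" if "\<omega> \<in> space M" for \<omega>
    using that closure_subset[of data_range] unfolding data_range_def by auto
  then show "AE \<omega> in M. data j \<omega> \<in> closure data_range"
    by (intro AE_data_in) auto
qed simp

lemma measurable_mf_mean [measurable]: "mf_mean \<in> borel_measurable borel"
proof -
  have "(\<lambda>t. if t \<in> {0..T} then mf_mean t else 0) \<in> borel_measurable borel"
    by (rule borel_measurable_continuous_on_if) (simp_all add: continuous_on_mf_mean)
  moreover have "(\<lambda>t. if t \<in> {0..T} then mf_mean t else 0) = mf_mean"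
    by (auto simp: fun_eq_iff mf_mean_def mf_path_def)
  ultimately show ?thesis
    by simp
qed

lemma measurable_empirical_error:
  "(\<lambda>p. empirical_error N (fst p) (snd p)) \<in> borel_measurable (M \<Otimes>\<^sub>M lborel)"
proof -
  have "(\<lambda>p. mf_path (data j (fst p)) (snd p)) \<in> borel_measurable (M \<Otimes>\<^sub>M lborel)" for j
  proof -
    have "(\<lambda>p. (data j (fst p), snd p)) \<in> M \<Otimes>\<^sub>M lborel \<rightarrow>\<^sub>M borel \<Otimes>\<^sub>M borel"
      by measurable
    from measurable_compose[OF this[unfolded borel_prod] measurable_mf_path] show ?thesis
      by simp
  qed
  moreover have "(\<lambda>p. mf_mean (snd p)) \<in> borel_measurable (M \<Otimes>\<^sub>M lborel)"
    by measurable
  ultimately show ?thesis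
    unfolding empirical_error_def
    by (intro borel_measurable_diff borel_measurable_divide borel_measurable_sum) auto
qed

definition error_energy :: "nat \<Rightarrow> 'a \<Rightarrow> ennreal" where
  "error_energy N \<omega> = (\<integral>\<^sup>+ s. ennreal ((empirical_error N \<omega> s)\<^sup>2) * indicator {0..T} s \<partial>lborel)"

lemma error_energy_eq: "error_energy N \<omega> = ennreal (integral {0..T} (\<lambda>s. (empirical_error N \<omega> s)\<^sup>2))"
  unfolding error_energy_def
  by (rule nn_integral_has_integral_lebesgue' integrable_integral integrable_continuous_interval
      continuous_intros continuous_on_empirical_error | simp)+

lemma measurable_error_energy [measurable]: "error_energy N \<in> borel_measurable M"
proof -
  have "(\<lambda>p. ennreal ((empirical_error N (fst p) (snd p))\<^sup>2) * indicator {0..T} (snd p))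
      \<in> borel_measurable (M \<Otimes>\<^sub>M lborel)"
    using measurable_empirical_error by measurable
  then show ?thesis
    unfolding error_energy_def by (intro lborel.borel_measurable_nn_integral) (simp add: case_prod_beta')
qed

lemma envelope_moment_nonneg: "0 \<le> envelope_moment"
  unfolding envelope_moment_def by simp

lemma nn_integral_error_energy_le:
  assumes "0 < N"
  shows "(\<integral>\<^sup>+ \<omega>. error_energy N \<omega> \<partial>M) \<le> ennreal (T * envelope_moment / real N)"
proof -
  interpret pair_sigma_finite M lborel
    by unfold_locales
  define f where "f p = ennreal ((empirical_error N (fst p) (snd p))\<^sup>2) * indicator {0..T} (snd p)" for p
  have "f \<in> borel_measurable (M \<Otimes>\<^sub>M lborel)"
    unfolding f_def using measurable_empirical_error by measurable
  then have "(\<integral>\<^sup>+ \<omega>. error_energy N \<omega> \<partial>M)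
      = (\<integral>\<^sup>+ s. (\<integral>\<^sup>+ \<omega>. ennreal ((empirical_error N \<omega> s)\<^sup>2) * indicator {0..T} s \<partial>M) \<partial>lborel)"
    unfolding error_energy_def using Fubini[of f] by (simp add: f_def)
  also have "\<dots> \<le> (\<integral>\<^sup>+ s. ennreal (envelope_moment / real N) * indicator {0..T} s \<partial>lborel)"
  proof (rule nn_integral_mono)
    fix s
    have "(\<integral>\<^sup>+ \<omega>. ennreal ((empirical_error N \<omega> s)\<^sup>2) \<partial>M) \<le> ennreal (envelope_moment / real N)"
      using expectation_empirical_error_sq[OF assms, of s]
      by (simp add: nn_integral_eq_integral ennreal_leI)
    then show "(\<integral>\<^sup>+ \<omega>. ennreal ((empirical_error N \<omega> s)\<^sup>2) * indicator {0..T} s \<partial>M)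
        \<le> ennreal (envelope_moment / real N) * indicator {0..T} s"
      by (cases "s \<in> {0..T}") simp_all
  qed
  also have "\<dots> = ennreal (T * envelope_moment / real N)"
    using T envelope_moment_nonneg by (simp add: nn_integral_cmult_indicator ennreal_mult[symmetric])
  finally show ?thesis .
qed

definition chaos_const :: real where
  "chaos_const = 6 * \<epsilon>\<^sup>2 * coupling_factor * T * envelope_moment"

text \<open>The supremum need not be measurable, but the lower integral is monotone; the AM-GM inequality
  \<open>2 \<surd>a \<le> a/\<eta> + \<eta>\<close> replaces Jensen's inequality.\<close>

lemma nn_integral_sup_error_le:
  assumes "i < N" and "0 < \<eta>"
  shows "(\<integral>\<^sup>+ \<omega>. ennreal ((SUP t\<in>{0..T}. \<bar>x N i \<omega> t - xh i \<omega> t\<bar>)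
                            + (SUP t\<in>{0..T}. \<bar>y N i \<omega> t - yh i \<omega> t\<bar>)) \<partial>M)
    \<le> ennreal (chaos_const / (\<eta> * real N) + \<eta>)"
proof -
  define K where "K = 6 * \<epsilon>\<^sup>2 * coupling_factor"
  have K: "0 \<le> K"
    unfolding K_def using coupling_factor_nonneg by simp
  have "AE \<omega> in M. ennreal ((SUP t\<in>{0..T}. \<bar>x N i \<omega> t - xh i \<omega> t\<bar>) + (SUP t\<in>{0..T}. \<bar>y N i \<omega> t - yh i \<omega> t\<bar>))
      \<le> ennreal (K / \<eta>) * error_energy N \<omega> + ennreal \<eta>"
    using AE_data_in_closure[of N]
  proof (rule AE_mp, intro AE_I2 impI)
    fix \<omega> assume \<omega>: "\<omega> \<in> space M" and in_closure: "\<forall>j\<in>{..<N}. data j \<omega> \<in> closure data_range"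
    define q where "q = integral {0..T} (\<lambda>s. (empirical_error N \<omega> s)\<^sup>2)"
    have "0 \<le> q"
      unfolding q_def
      by (intro integral_nonneg integrable_continuous_interval continuous_intros continuous_on_empirical_error) simp
    have "(SUP t\<in>{0..T}. \<bar>x N i \<omega> t - xh i \<omega> t\<bar>) + (SUP t\<in>{0..T}. \<bar>y N i \<omega> t - yh i \<omega> t\<bar>)
        \<le> 2 * sqrt (K * q / \<eta> * \<eta>)"
      using sup_error_le[OF \<open>i < N\<close> \<omega>] in_closure \<open>0 < \<eta>\<close> by (simp add: K_def q_def)
    also have "\<dots> \<le> K * q / \<eta> + \<eta>"
      using arith_geo_mean_sqrt[of "K * q / \<eta>" \<eta>] K \<open>0 \<le> q\<close> \<open>0 < \<eta>\<close> by simp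
    finally show "ennreal ((SUP t\<in>{0..T}. \<bar>x N i \<omega> t - xh i \<omega> t\<bar>) + (SUP t\<in>{0..T}. \<bar>y N i \<omega> t - yh i \<omega> t\<bar>))
        \<le> ennreal (K / \<eta>) * error_energy N \<omega> + ennreal \<eta>"
      using K \<open>0 \<le> q\<close> \<open>0 < \<eta>\<close>
      by (simp add: error_energy_eq q_def[symmetric] ennreal_mult[symmetric] ennreal_plus[symmetric] ennreal_leI
          del: ennreal_plus)
  qed
  then have "(\<integral>\<^sup>+ \<omega>. ennreal ((SUP t\<in>{0..T}. \<bar>x N i \<omega> t - xh i \<omega> t\<bar>)
                            + (SUP t\<in>{0..T}. \<bar>y N i \<omega> t - yh i \<omega> t\<bar>)) \<partial>M)
      \<le> (\<integral>\<^sup>+ \<omega>. ennreal (K / \<eta>) * error_energy N \<omega> + ennreal \<eta> \<partial>M)"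
    by (rule nn_integral_mono_AE)
  also have "\<dots> = ennreal (K / \<eta>) * (\<integral>\<^sup>+ \<omega>. error_energy N \<omega> \<partial>M) + ennreal \<eta>"
    by (simp add: nn_integral_add nn_integral_cmult emeasure_space_1)
  also have "\<dots> \<le> ennreal (K / \<eta>) * ennreal (T * envelope_moment / real N) + ennreal \<eta>"
    using nn_integral_error_energy_le[of N] \<open>i < N\<close> by (intro add_mono mult_left_mono) auto
  also have "\<dots> = ennreal (chaos_const / (\<eta> * real N) + \<eta>)"
    using K T envelope_moment_nonneg \<open>0 < \<eta>\<close>
    by (simp add: chaos_const_def K_def ennreal_mult[symmetric] ennreal_plus[symmetric] del: ennreal_plus)
  finally show ?thesis .
qed

lemma propagation_of_chaos:
  "(\<lambda>N. \<integral>\<^sup>+ \<omega>. ennreal ((SUP t\<in>{0..T}. \<bar>x N i \<omega> t - xh i \<omega> t\<bar>)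
                        + (SUP t\<in>{0..T}. \<bar>y N i \<omega> t - yh i \<omega> t\<bar>)) \<partial>M) \<longlonglongrightarrow> 0"
proof (rule ennreal_tendsto_0_if_eventually_le)
  fix e :: real assume "0 < e"
  define \<eta> where "\<eta> = e / 2"
  have "0 < \<eta>"
    unfolding \<eta>_def using \<open>0 < e\<close> by simp
  have "eventually (\<lambda>N. i < N \<and> nat \<lceil>chaos_const / \<eta>\<^sup>2\<rceil> \<le> N) sequentially"
    by (intro eventually_conj eventually_gt_at_top eventually_ge_at_top)
  then show "eventually (\<lambda>N. (\<integral>\<^sup>+ \<omega>. ennreal ((SUP t\<in>{0..T}. \<bar>x N i \<omega> t - xh i \<omega> t\<bar>)
                        + (SUP t\<in>{0..T}. \<bar>y N i \<omega> t - yh i \<omega> t\<bar>)) \<partial>M) \<le> ennreal e) sequentially"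
  proof (rule eventually_mono, safe)
    fix N assume "i < N" "nat \<lceil>chaos_const / \<eta>\<^sup>2\<rceil> \<le> N"
    then have "chaos_const \<le> \<eta>\<^sup>2 * real N"
      using \<open>0 < \<eta>\<close> by (simp add: nat_le_iff ceiling_le_iff divide_le_eq mult.commute)
    then have "chaos_const / (\<eta> * real N) \<le> \<eta>"
      using \<open>0 < \<eta>\<close> \<open>i < N\<close> by (simp add: divide_le_eq power2_eq_square mult.assoc)
    then have "ennreal (chaos_const / (\<eta> * real N) + \<eta>) \<le> ennreal e"
      unfolding \<eta>_def by (intro ennreal_leI) simp
    with nn_integral_sup_error_le[OF \<open>i < N\<close> \<open>0 < \<eta>\<close>]
    show "(\<integral>\<^sup>+ \<omega>. ennreal ((SUP t\<in>{0..T}. \<bar>x N i \<omega> t - xh i \<omega> t\<bar>)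
                        + (SUP t\<in>{0..T}. \<bar>y N i \<omega> t - yh i \<omega> t\<bar>)) \<partial>M) \<le> ennreal e"
      by (rule order_trans)
  qed
qed

end

theorem theorem1:
  fixes M :: "'a measure"
    and \<xi> \<delta> \<nu> \<epsilon> \<mu> \<sigma> \<alpha> \<beta> \<gamma> T :: real
    and I x0 y0 :: "nat \<Rightarrow> 'a \<Rightarrow> real"
    and x y :: "nat \<Rightarrow> nat \<Rightarrow> 'a \<Rightarrow> real \<Rightarrow> real"
    and xh yh :: "nat \<Rightarrow> 'a \<Rightarrow> real \<Rightarrow> real"
    and i :: nat
  assumes P: "prob_space M"
    and delta: "\<delta> < 0"
    and T: "T > 0"
    and indep: "prob_space.indep_vars M (\<lambda>_. borel)
                  (\<lambda>k. case k of Inl j \<Rightarrow> (\<lambda>\<omega>. (I j \<omega>, 0::real))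
                               | Inr j \<Rightarrow> (\<lambda>\<omega>. (x0 j \<omega>, y0 j \<omega>))) UNIV"
    and gauss: "\<And>j. distributed M lborel (I j) std_normal_density"
    and iid_init: "\<And>j. distr M borel (\<lambda>\<omega>. (x0 j \<omega>, y0 j \<omega>)) = distr M borel (\<lambda>\<omega>. (x0 0 \<omega>, y0 0 \<omega>))"
    and mom_x: "integrable M (\<lambda>\<omega>. (x0 0 \<omega>)^2)"
    and mom_y: "integrable M (\<lambda>\<omega>. (y0 0 \<omega>)^2)"
    and ode_x: "\<And>N j \<omega> t. N \<ge> 1 \<Longrightarrow> j < N \<Longrightarrow> \<omega> \<in> space M \<Longrightarrow> t \<in> {0..T} \<Longrightarrow>
       (x N j \<omega> has_real_derivative
          (\<xi> * x N j \<omega> t + \<delta> * (x N j \<omega> t)^3 + \<nu> * y N j \<omega> t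
           + \<epsilon> * ((\<Sum>k<N. x N k \<omega> t) / real N) + \<mu> + \<sigma> * I j \<omega>)) (at t within {0..T})"
    and ode_y: "\<And>N j \<omega> t. N \<ge> 1 \<Longrightarrow> j < N \<Longrightarrow> \<omega> \<in> space M \<Longrightarrow> t \<in> {0..T} \<Longrightarrow>
       (y N j \<omega> has_real_derivative (\<alpha> * (x N j \<omega> t + \<beta> * y N j \<omega> t + \<gamma>))) (at t within {0..T})"
    and init: "\<And>N j \<omega>. N \<ge> 1 \<Longrightarrow> j < N \<Longrightarrow> \<omega> \<in> space M \<Longrightarrow>
       x N j \<omega> 0 = x0 j \<omega> \<and> y N j \<omega> 0 = y0 j \<omega>"
    and mf_int: "\<And>j t. t \<in> {0..T} \<Longrightarrow> integrable M (\<lambda>\<omega>. xh j \<omega> t)"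
    and mf_x: "\<And>j \<omega> t. \<omega> \<in> space M \<Longrightarrow> t \<in> {0..T} \<Longrightarrow>
       (xh j \<omega> has_real_derivative
          (\<xi> * xh j \<omega> t + \<delta> * (xh j \<omega> t)^3 + \<nu> * yh j \<omega> t
           + \<epsilon> * prob_space.expectation M (\<lambda>\<omega>'. xh j \<omega>' t) + \<mu> + \<sigma> * I j \<omega>)) (at t within {0..T})"
    and mf_y: "\<And>j \<omega> t. \<omega> \<in> space M \<Longrightarrow> t \<in> {0..T} \<Longrightarrow>
       (yh j \<omega> has_real_derivative (\<alpha> * (xh j \<omega> t + \<beta> * yh j \<omega> t + \<gamma>))) (at t within {0..T})"
    and mf_init: "\<And>j \<omega>. \<omega> \<in> space M \<Longrightarrow> xh j \<omega> 0 = x0 j \<omega> \<and> yh j \<omega> 0 = y0 j \<omega>"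
  shows "(\<lambda>N. \<integral>\<^sup>+ \<omega>. ennreal ((SUP t\<in>{0..T}. \<bar>x N i \<omega> t - xh i \<omega> t\<bar>)
                              + (SUP t\<in>{0..T}. \<bar>y N i \<omega> t - yh i \<omega> t\<bar>)) \<partial>M)
         \<longlonglongrightarrow> 0"
  proof -
  interpret fhn_mean_field M \<xi> \<delta> \<nu> \<epsilon> \<mu> \<sigma> \<alpha> \<beta> \<gamma> T I x0 y0 x y xh yh i
    by (rule fhn_mean_field.intro[OF P fhn_mean_field_axioms.intro])
       (fact delta T indep gauss iid_init mom_x mom_y ode_x ode_y init mf_x mf_y mf_init)+
  show ?thesis
    by (rule propagation_of_chaos)
qed

end
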